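(* Let $v,a,b,c\in\mathbb{C}$ with $a\neq0$, $b\neq0$, $\Re(v)<4$, $\Re(c)>0$, and $\Re(vc+a+b)>0$, $\Re(vc+a-b)>0$, $\Re(vc-a+b)>0$, $\Re(vc-a-b)>0$. Put $\sigma_3=\frac v2-\frac{a}{2c}-\frac{b}{2c}$, $\sigma_4=\frac v2-\frac{a}{2c}+\frac{b}{2c}$, $\sigma_5=\frac v2+\frac{a}{2c}+\frac{b}{2c}$, $\sigma_6=\frac v2+\frac{a}{2c}-\frac{b}{2c}$, and $P=(vc-a-b)(vc+a+b)(vc-a+b)(vc+a-b)=\{(vc)^2-(a+b)^2\}\{(vc)^2-(a-b)^2\}$. Assume $\frac v2\notin\mathbb{Z}_0^-$ and $1+\sigma_j\notin\mathbb{Z}_0^-$ for $j=3,4,5,6$. Then $$ {}_6F_5\!\left(\begin{matrix}v,\ 1+\frac v2,\ \sigma_3,\ \sigma_5,\ \sigma_4,\ \sigma_6\\ \frac v2,\ 1+\sigma_3,\ 1+\sigma_5,\ 1+\sigma_4,\ 1+\sigma_6\end{matrix};\,-1\right) =\frac{P}{16\,v\,a\,b\,c^{2}\,\Gamma(v)}\Big[\Gamma(\sigma_5)\Gamma(\sigma_3)-\Gamma(\sigma_6)\Gamma(\sigma_4)\Big]. $$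
   Context: $\mathbb{Z}_0^-=\{0,-1,-2,\dots\}$. The Pochhammer symbol is $(\lambda)_0=1$, $(\lambda)_n=\lambda(\lambda+1)\cdots(\lambda+n-1)$ for $n\ge1$. The generalized hypergeometric series is ${}_pF_q\!\left(\begin{matrix}\alpha_1,\dots,\alpha_p\\ \beta_1,\dots,\beta_q\end{matrix};z\right)=\sum_{n=0}^\infty\frac{(\alpha_1)_n\cdots(\alpha_p)_n}{(\beta_1)_n\cdots(\beta_q)_n}\frac{z^n}{n!}$ (with no $\beta_j\in\mathbb{Z}_0^-$); when $p=q+1$ and $|z|=1$, $z\ne 1$, it converges if $\Re(\sum\beta_j-\sum\alpha_i)>-1$, and for $z=1$ it converges if $\Re(\sum\beta_j-\sum\alpha_i)>0$. $\Gamma$ is Euler's gamma function. *)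

theory Defs
  imports "HOL-Analysis.Analysis"
begin

definition hyp_term :: "complex list \<Rightarrow> complex list \<Rightarrow> complex \<Rightarrow> nat \<Rightarrow> complex" where
  "hyp_term as bs z n =
     (\<Prod>a\<leftarrow>as. pochhammer a n) / (\<Prod>b\<leftarrow>bs. pochhammer b n) * z ^ n / of_nat (fact n)"

definition hypergeom :: "complex list \<Rightarrow> complex list \<Rightarrow> complex \<Rightarrow> complex" where
  "hypergeom as bs z = (\<Sum>n. hyp_term as bs z n)"

end

theory Submission
  imports Defs
begin

(*
  Write s3 + s5 = s4 + s6 = v. Partial fractions turn the n-th term of the very-well-poised 6F5
  into a constant times (-v choose n) K(n), where K(n) = 1/(s5+n) + 1/(s3+n) - 1/(s6+n) - 1/(s4+n).
  For s + t = v the series of (-v choose n) (1/(s+n) + 1/(t+n)) is formally the Beta integral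
  of (x^(s-1) + x^(t-1)) (1+x)^(-v) over [0,1], i.e. Gamma(s) Gamma(t) / Gamma(v); in general
  only the difference K of two such pairs converges. Instead of integrals we use Euler's product:
  multiplying the partial fraction expansions of N!/(s)_(N+1) and N!/(t)_(N+1) gives an exact
  finite identity whose left side tends to Gamma(s) Gamma(t) / Gamma(v) and whose n-th term
  carries a weight rho_N(n) -> 1. The limit N -> oo is taken with Tannery's theorem: the terms
  are O(n^(Re v - 4)), and for Re v >= 3 one first adds consecutive terms, which gains a factor 1/n.
*)

lemma add_of_nat_neq_0_if_notin_nonpos_Ints:
  "z \<notin> \<int>\<^sub>\<le>\<^sub>0 \<Longrightarrow> z + of_nat n \<noteq> 0"
  using plus_of_nat_eq_0_imp by blast

lemma add_of_nat_notin_nonpos_Ints: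
  assumes "z \<notin> \<int>\<^sub>\<le>\<^sub>0"
  shows "z + of_nat n \<notin> \<int>\<^sub>\<le>\<^sub>0"
proof
  assume "z + of_nat n \<in> \<int>\<^sub>\<le>\<^sub>0"
  then have "z + of_nat n - of_nat n \<in> \<int>\<^sub>\<le>\<^sub>0" by (rule nonpos_Ints_diff_Nats) simp
  with assms show False by simp
qed

section \<open>Partial fractions of the Beta function\<close>

lemma alternating_binomial_sum_Suc:
  fixes f :: "nat \<Rightarrow> 'a::comm_ring_1"
  shows "(\<Sum>k\<le>Suc N. (-1)^k * of_nat (Suc N choose k) * f k)
       = (\<Sum>k\<le>N. (-1)^k * of_nat (N choose k) * (f k - f (Suc k)))"
proof -
  have "(\<Sum>k\<le>Suc N. (-1)^k * of_nat (Suc N choose k) * f k)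
      = (\<Sum>k\<le>Suc N. (-1)^k * of_nat (N choose k) * f k)
        + (\<Sum>k\<le>Suc N. (-1)^k * of_nat (if k = 0 then 0 else N choose (k - 1)) * f k)"
  proof (subst sum.distrib[symmetric], rule sum.cong[OF refl])
    fix k
    show "(-1)^k * of_nat (Suc N choose k) * f k = (-1)^k * of_nat (N choose k) * f k
        + (-1)^k * of_nat (if k = 0 then 0 else N choose (k - 1)) * f k"
      by (cases k) (simp_all add: algebra_simps)
  qed
  also have "(\<Sum>k\<le>Suc N. (-1)^k * of_nat (N choose k) * f k)
      = (\<Sum>k\<le>N. (-1)^k * of_nat (N choose k) * f k)"
    by (simp add: binomial_eq_0)
  also have "(\<Sum>k\<le>Suc N. (-1)^k * of_nat (if k = 0 then 0 else N choose (k - 1)) * f k)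
      = - (\<Sum>k\<le>N. (-1)^k * of_nat (N choose k) * f (Suc k))"
    by (subst sum.atMost_Suc_shift) (simp add: sum_negf[symmetric])
  finally show ?thesis
    by (simp add: sum_subtractf right_diff_distrib)
qed

lemma fact_div_pochhammer_diff:
  fixes z :: "'a::field_char_0"
  assumes "z \<notin> \<int>\<^sub>\<le>\<^sub>0"
  shows "fact N / pochhammer z (Suc N) - fact N / pochhammer (z + 1) (Suc N)
       = fact (Suc N) / pochhammer z (Suc (Suc N))"
proof -
  define P where "P = pochhammer z (Suc (Suc N))"
  have "P \<noteq> 0"
    using assms by (auto simp: P_def dest: pochhammer_eq_0_imp_nonpos_Int)
  have P_Suc: "pochhammer z (Suc N) * (z + of_nat (Suc N)) = P"
    unfolding P_def by (rule pochhammer_Suc[symmetric])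
  have P_rec: "z * pochhammer (z + 1) (Suc N) = P"
    unfolding P_def by (rule pochhammer_rec[symmetric])
  have "z + of_nat (Suc N) \<noteq> 0" "z \<noteq> 0"
    using \<open>P \<noteq> 0\<close> P_Suc P_rec by auto
  have "fact N / pochhammer z (Suc N) = fact N * (z + of_nat (Suc N)) / P"
    unfolding P_Suc[symmetric] using \<open>z + of_nat (Suc N) \<noteq> 0\<close>
    by (rule nonzero_mult_divide_mult_cancel_right[symmetric])
  moreover have "fact N / pochhammer (z + 1) (Suc N) = z * fact N / P"
    unfolding P_rec[symmetric] using \<open>z \<noteq> 0\<close>
    by (rule nonzero_mult_divide_mult_cancel_left[symmetric])
  ultimately show ?thesis
    by (simp add: diff_divide_distrib[symmetric] algebra_simps P_def[symmetric])
qed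

lemma fact_div_pochhammer_eq_sum:
  fixes z :: "'a::field_char_0"
  assumes "z \<notin> \<int>\<^sub>\<le>\<^sub>0"
  shows "fact N / pochhammer z (Suc N) = (\<Sum>k\<le>N. (-1)^k * of_nat (N choose k) / (z + of_nat k))"
  using assms
proof (induction N arbitrary: z)
  case 0
  then show ?case by simp
next
  case (Suc N)
  have "z + 1 \<notin> \<int>\<^sub>\<le>\<^sub>0"
    using add_of_nat_notin_nonpos_Ints[OF Suc.prems, of 1] by simp
  have "fact (Suc N) / pochhammer z (Suc (Suc N))
      = fact N / pochhammer z (Suc N) - fact N / pochhammer (z + 1) (Suc N)"
    by (rule fact_div_pochhammer_diff[symmetric, OF Suc.prems])
  also have "\<dots> = (\<Sum>k\<le>N. (-1)^k * of_nat (N choose k) / (z + of_nat k))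
        - (\<Sum>k\<le>N. (-1)^k * of_nat (N choose k) / (z + 1 + of_nat k))"
    using Suc.IH[OF Suc.prems] Suc.IH[OF \<open>z + 1 \<notin> \<int>\<^sub>\<le>\<^sub>0\<close>] by simp
  also have "\<dots> = (\<Sum>k\<le>N. (-1)^k * of_nat (N choose k) * (1 / (z + of_nat k) - 1 / (z + of_nat (Suc k))))"
    by (simp add: sum_subtractf[symmetric] algebra_simps)
  also have "\<dots> = (\<Sum>k\<le>Suc N. (-1)^k * of_nat (Suc N choose k) / (z + of_nat k))"
    using alternating_binomial_sum_Suc[of N "\<lambda>k. 1 / (z + of_nat k)"] by simp
  finally show ?case .
qed

text \<open>\<open>beta_nat N z\<close> is the Beta value \<open>B(z, N + 1)\<close>, so that \<open>Gamma_series z N = N\<^sup>z beta_nat N z\<close>.\<close>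

definition beta_nat :: "nat \<Rightarrow> 'a::field_char_0 \<Rightarrow> 'a" where
  "beta_nat N z = fact N / pochhammer z (Suc N)"

lemma recip_mult_eq_recip_add_div:
  fixes x y :: "'a::field"
  assumes "x \<noteq> 0" "y \<noteq> 0" "x + y \<noteq> 0"
  shows "1 / (x * y) = (1 / x + 1 / y) / (x + y)"
proof -
  have "1 / x + 1 / y = (x + y) / (x * y)"
    using assms by (simp add: field_simps)
  then show ?thesis
    using assms by simp
qed

lemma double_sum_beta_nat:
  fixes v :: "'a::field_char_0"
  assumes "v \<notin> \<int>\<^sub>\<le>\<^sub>0"
  shows "(\<Sum>j\<le>N. \<Sum>k\<le>N. (-1)^j * of_nat (N choose j) * ((-1)^k * of_nat (N choose k)) * g j
            / (v + of_nat j + of_nat k))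
       = (\<Sum>j\<le>N. (-1)^j * of_nat (N choose j) * beta_nat N (v + of_nat j) * g j)"
proof (rule sum.cong[OF refl])
  fix j
  have "beta_nat N (v + of_nat j) = (\<Sum>k\<le>N. (-1)^k * of_nat (N choose k) / (v + of_nat j + of_nat k))"
    unfolding beta_nat_def
    by (rule fact_div_pochhammer_eq_sum[OF add_of_nat_notin_nonpos_Ints[OF assms]])
  then show "(\<Sum>k\<le>N. (-1)^j * of_nat (N choose j) * ((-1)^k * of_nat (N choose k)) * g j
            / (v + of_nat j + of_nat k))
      = (-1)^j * of_nat (N choose j) * beta_nat N (v + of_nat j) * g j"
    by (simp add: sum_distrib_left sum_distrib_right mult_ac)
qed

lemma beta_nat_mult:
  fixes s t v :: "'a::field_char_0"
  assumes st: "s + t = v" and "v \<notin> \<int>\<^sub>\<le>\<^sub>0" "s \<notin> \<int>\<^sub>\<le>\<^sub>0" "t \<notin> \<int>\<^sub>\<le>\<^sub>0"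
  shows "beta_nat N s * beta_nat N t
       = (\<Sum>j\<le>N. (-1)^j * of_nat (N choose j) * beta_nat N (v + of_nat j)
            * (1 / (s + of_nat j) + 1 / (t + of_nat j)))"
proof -
  define A where "A j = ((-1)^j * of_nat (N choose j) :: 'a)" for j
  have split: "A j / (s + of_nat j) * (A k / (t + of_nat k))
      = A j * A k * (1 / (s + of_nat j)) / (v + of_nat j + of_nat k)
        + A j * A k * (1 / (t + of_nat k)) / (v + of_nat j + of_nat k)" for j k
  proof -
    have "(s + of_nat j) + (t + of_nat k) \<noteq> 0"
      using add_of_nat_neq_0_if_notin_nonpos_Ints[OF assms(2), of "j + k"]
      by (simp add: st[symmetric] algebra_simps)
    moreover have "s + of_nat j \<noteq> 0" "t + of_nat k \<noteq> 0"
      using assms(3,4) by (simp_all add: add_of_nat_neq_0_if_notin_nonpos_Ints)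
    ultimately have recip: "1 / ((s + of_nat j) * (t + of_nat k))
        = (1 / (s + of_nat j) + 1 / (t + of_nat k)) / (v + of_nat j + of_nat k)"
      by (simp add: recip_mult_eq_recip_add_div st[symmetric] add_ac)
    have "A j / (s + of_nat j) * (A k / (t + of_nat k)) = A j * A k * (1 / ((s + of_nat j) * (t + of_nat k)))"
      by simp
    also have "\<dots> = A j * A k * ((1 / (s + of_nat j) + 1 / (t + of_nat k)) / (v + of_nat j + of_nat k))"
      by (simp only: recip)
    finally show ?thesis
      by (simp add: add_divide_distrib algebra_simps)
  qed
  have "beta_nat N s * beta_nat N t = (\<Sum>j\<le>N. \<Sum>k\<le>N. A j / (s + of_nat j) * (A k / (t + of_nat k)))"
    unfolding beta_nat_def A_def
    by (simp add: fact_div_pochhammer_eq_sum assms sum_product)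
  also have "\<dots> = (\<Sum>j\<le>N. \<Sum>k\<le>N. A j * A k * (1 / (s + of_nat j)) / (v + of_nat j + of_nat k))
      + (\<Sum>k\<le>N. \<Sum>j\<le>N. A k * A j * (1 / (t + of_nat k)) / (v + of_nat k + of_nat j))"
    unfolding split sum.distrib by (subst (2) sum.swap) (simp add: mult_ac add_ac)
  also have "\<dots> = (\<Sum>j\<le>N. A j * beta_nat N (v + of_nat j) * (1 / (s + of_nat j) + 1 / (t + of_nat j)))"
    unfolding A_def double_sum_beta_nat[OF assms(2)]
    by (simp add: sum.distrib[symmetric] distrib_left)
  finally show ?thesis
    unfolding A_def .
qed

section \<open>The truncated identity\<close>

text \<open>\<open>trunc_weight v N j = N!/((N - j)! (v + N + 1)\<^sub>j)\<close>: it vanishes for \<open>j > N\<close> and tends to 1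
  as \<open>N \<rightarrow> \<infinity>\<close>.\<close>

definition trunc_factor :: "'a::field_char_0 \<Rightarrow> nat \<Rightarrow> nat \<Rightarrow> 'a" where
  "trunc_factor v N i = (of_nat N - of_nat i) / (v + of_nat N + 1 + of_nat i)"

definition trunc_weight :: "'a::field_char_0 \<Rightarrow> nat \<Rightarrow> nat \<Rightarrow> 'a" where
  "trunc_weight v N j = (\<Prod>i<j. trunc_factor v N i)"

lemma binomial_beta_nat_eq:
  fixes v :: "'a::field_char_0"
  assumes "v \<notin> \<int>\<^sub>\<le>\<^sub>0"
  shows "(-1)^j * of_nat (N choose j) * beta_nat N (v + of_nat j) * pochhammer v (Suc N) / fact N
       = ((- v) gchoose j) * trunc_weight v N j"
proof -
  have nonzero: "pochhammer (v + of_nat j) (Suc N) \<noteq> 0" "pochhammer (v + of_nat (Suc N)) j \<noteq> 0"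
    using add_of_nat_notin_nonpos_Ints[OF assms] by (metis pochhammer_eq_0_imp_nonpos_Int)+
  have "pochhammer v (Suc N) * pochhammer (v + of_nat (Suc N)) j
      = pochhammer v j * pochhammer (v + of_nat j) (Suc N)"
    using pochhammer_product'[of v "Suc N" j] pochhammer_product'[of v j "Suc N"] by (simp add: add_ac)
  then have ratio: "pochhammer v (Suc N) / pochhammer (v + of_nat j) (Suc N)
      = pochhammer v j / pochhammer (v + of_nat (Suc N)) j"
    using nonzero by (simp add: field_simps)
  have binomial: "(of_nat (N choose j) :: 'a) = (\<Prod>i<j. of_nat N - of_nat i) / fact j"
    unfolding binomial_gbinomial gbinomial_prod_rev by (simp add: atLeast0LessThan)
  have weight: "trunc_weight v N j = (\<Prod>i<j. of_nat N - of_nat i) / pochhammer (v + of_nat (Suc N)) j"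
    unfolding trunc_weight_def trunc_factor_def pochhammer_prod
    by (simp add: atLeast0LessThan prod_dividef add_ac)
  have "(-1)^j * of_nat (N choose j) * beta_nat N (v + of_nat j) * pochhammer v (Suc N) / fact N
      = (-1)^j * ((\<Prod>i<j. of_nat N - of_nat i) / fact j)
        * (pochhammer v (Suc N) / pochhammer (v + of_nat j) (Suc N))"
    unfolding beta_nat_def binomial by simp
  also have "\<dots> = ((- v) gchoose j) * trunc_weight v N j"
    unfolding ratio weight gbinomial_pochhammer by simp
  finally show ?thesis .
qed

lemma beta_nat_mult_eq_truncated_sum:
  fixes s t v :: "'a::field_char_0"
  assumes "s + t = v" "v \<notin> \<int>\<^sub>\<le>\<^sub>0" "s \<notin> \<int>\<^sub>\<le>\<^sub>0" "t \<notin> \<int>\<^sub>\<le>\<^sub>0"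
  shows "beta_nat N s * beta_nat N t * pochhammer v (Suc N) / fact N
       = (\<Sum>j\<le>N. ((- v) gchoose j) * trunc_weight v N j * (1 / (s + of_nat j) + 1 / (t + of_nat j)))"
  unfolding beta_nat_mult[OF assms] sum_distrib_right sum_divide_distrib
  by (rule sum.cong[OF refl]) (simp add: binomial_beta_nat_eq[OF assms(2), symmetric] algebra_simps)

lemma Gamma_series_mult_rGamma_series:
  fixes s t :: complex
  assumes "s + t = v" "s \<notin> \<int>\<^sub>\<le>\<^sub>0" "t \<notin> \<int>\<^sub>\<le>\<^sub>0"
  shows "Gamma_series s N * Gamma_series t N * rGamma_series v N
       = beta_nat N s * beta_nat N t * pochhammer v (Suc N) / fact N"
proof -
  define L where "L = (of_real (ln (of_nat N)) :: complex)"
  have "exp (s * L) * exp (t * L) = exp (v * L)"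
    unfolding assms(1)[symmetric] by (simp add: exp_add[symmetric] algebra_simps)
  moreover have "pochhammer s (Suc N) \<noteq> 0" "pochhammer t (Suc N) \<noteq> 0"
    using assms(2,3) by (auto dest: pochhammer_eq_0_imp_nonpos_Int)
  ultimately show ?thesis
    unfolding Gamma_series_def rGamma_series_def beta_nat_def L_def[symmetric]
    by (simp add: field_simps)
qed

lemma beta_nat_mult_tendsto:
  fixes s t :: complex
  assumes "s + t = v" "v \<notin> \<int>\<^sub>\<le>\<^sub>0" "s \<notin> \<int>\<^sub>\<le>\<^sub>0" "t \<notin> \<int>\<^sub>\<le>\<^sub>0"
  shows "(\<lambda>N. \<Sum>j\<le>N. ((- v) gchoose j) * trunc_weight v N j * (1 / (s + of_nat j) + 1 / (t + of_nat j)))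
           \<longlonglongrightarrow> Gamma s * Gamma t * rGamma v"
proof -
  have "(\<lambda>N. Gamma_series s N * Gamma_series t N * rGamma_series v N) \<longlonglongrightarrow> Gamma s * Gamma t * rGamma v"
    by (intro tendsto_intros)
  then show ?thesis
    by (simp add: Gamma_series_mult_rGamma_series beta_nat_mult_eq_truncated_sum assms)
qed

definition recip_kernel :: "complex \<Rightarrow> complex \<Rightarrow> complex \<Rightarrow> complex \<Rightarrow> nat \<Rightarrow> complex" where
  "recip_kernel s t r w j = 1 / (s + of_nat j) + 1 / (t + of_nat j) - 1 / (r + of_nat j) - 1 / (w + of_nat j)"

lemma truncated_kernel_sum_tendsto:
  fixes s t r w v :: complex
  assumes "s + t = v" "r + w = v" "v \<notin> \<int>\<^sub>\<le>\<^sub>0"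
    and "s \<notin> \<int>\<^sub>\<le>\<^sub>0" "t \<notin> \<int>\<^sub>\<le>\<^sub>0" "r \<notin> \<int>\<^sub>\<le>\<^sub>0" "w \<notin> \<int>\<^sub>\<le>\<^sub>0"
  shows "(\<lambda>N. \<Sum>j\<le>N. ((- v) gchoose j) * trunc_weight v N j * recip_kernel s t r w j)
           \<longlonglongrightarrow> (Gamma s * Gamma t - Gamma r * Gamma w) * rGamma v"
proof -
  have "(\<lambda>N. (\<Sum>j\<le>N. ((- v) gchoose j) * trunc_weight v N j * (1 / (s + of_nat j) + 1 / (t + of_nat j)))
           - (\<Sum>j\<le>N. ((- v) gchoose j) * trunc_weight v N j * (1 / (r + of_nat j) + 1 / (w + of_nat j))))
         \<longlonglongrightarrow> Gamma s * Gamma t * rGamma v - Gamma r * Gamma w * rGamma v"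
    using assms by (intro tendsto_diff beta_nat_mult_tendsto)
  then show ?thesis
    unfolding recip_kernel_def sum_subtractf[symmetric] by (simp add: algebra_simps)
qed

section \<open>Decay of the kernel\<close>

definition centred_kernel :: "complex \<Rightarrow> complex \<Rightarrow> complex \<Rightarrow> complex" where
  "centred_kernel \<alpha> \<beta> X = 2 * X * (\<beta> - \<alpha>) / ((X^2 + \<alpha>) * (X^2 + \<beta>))"

lemma centred_kernel_eq_diff:
  assumes "X^2 + \<alpha> \<noteq> 0" "X^2 + \<beta> \<noteq> 0"
  shows "centred_kernel \<alpha> \<beta> X = 2 * X / (X^2 + \<alpha>) - 2 * X / (X^2 + \<beta>)"
  unfolding centred_kernel_def using assms by (simp add: field_simps)

lemma recip_add_recip_eq_centred:
  fixes s t v :: complex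
  assumes "s + t = v" "s + of_nat j \<noteq> 0" "t + of_nat j \<noteq> 0"
  shows "1 / (s + of_nat j) + 1 / (t + of_nat j)
       = 2 * (of_nat j + v / 2) / ((of_nat j + v / 2)^2 + (s * t - v^2 / 4))"
proof -
  have denom: "(of_nat j + v / 2)^2 + (s * t - v^2 / 4) = (s + of_nat j) * (t + of_nat j)"
    unfolding assms(1)[symmetric] by (simp add: power2_eq_square field_simps)
  have numer: "2 * (of_nat j + v / 2) = (s + of_nat j) + (t + of_nat j)"
    using assms(1) by simp
  show ?thesis
    unfolding denom numer using assms(2,3) by (simp add: field_simps)
qed

lemma recip_kernel_eq_centred_kernel:
  fixes s t r w v :: complex
  assumes st: "s + t = v" and rw: "r + w = v"
    and nz: "s + of_nat j \<noteq> 0" "t + of_nat j \<noteq> 0" "r + of_nat j \<noteq> 0" "w + of_nat j \<noteq> 0"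
  shows "recip_kernel s t r w j = centred_kernel (s * t - v^2 / 4) (r * w - v^2 / 4) (of_nat j + v / 2)"
proof -
  define X where "X = of_nat j + v / 2"
  have "X^2 + (s * t - v^2 / 4) = (s + of_nat j) * (t + of_nat j)"
    unfolding X_def st[symmetric] by (simp add: power2_eq_square field_simps)
  moreover have "X^2 + (r * w - v^2 / 4) = (r + of_nat j) * (w + of_nat j)"
    unfolding X_def rw[symmetric] by (simp add: power2_eq_square field_simps)
  ultimately have "X^2 + (s * t - v^2 / 4) \<noteq> 0" "X^2 + (r * w - v^2 / 4) \<noteq> 0"
    using nz by simp_all
  then have "centred_kernel (s * t - v^2 / 4) (r * w - v^2 / 4) X
      = 2 * X / (X^2 + (s * t - v^2 / 4)) - 2 * X / (X^2 + (r * w - v^2 / 4))"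
    by (rule centred_kernel_eq_diff)
  also have "\<dots> = recip_kernel s t r w j"
    unfolding recip_kernel_def X_def recip_add_recip_eq_centred[OF st nz(1,2), symmetric]
      recip_add_recip_eq_centred[OF rw nz(3,4), symmetric]
    by (simp add: diff_diff_eq)
  finally show ?thesis
    by (simp add: X_def)
qed

lemma norm_power2_add_ge:
  fixes X \<alpha> :: complex
  assumes "norm X ^ 2 \<ge> 2 * norm \<alpha>"
  shows "norm (X^2 + \<alpha>) \<ge> norm X ^ 2 / 2"
proof -
  have "norm X ^ 2 \<le> norm (X^2 + \<alpha>) + norm \<alpha>"
    using norm_triangle_sub[of "X^2" "X^2 + \<alpha>"] by (simp add: norm_power)
  then show ?thesis
    using assms by linarith
qed

lemma norm_centred_kernel_le:
  fixes X \<alpha> \<beta> :: complex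
  assumes "norm X \<ge> 1" "norm X ^ 2 \<ge> 2 * norm \<alpha>" "norm X ^ 2 \<ge> 2 * norm \<beta>"
  shows "norm (centred_kernel \<alpha> \<beta> X) \<le> 8 * norm (\<beta> - \<alpha>) / norm X ^ 3"
proof -
  have pos: "norm X > 0"
    using assms(1) by linarith
  then have pos4: "norm X ^ 4 / 4 > 0"
    by simp
  have "norm X ^ 4 / 4 = (norm X ^ 2 / 2) * (norm X ^ 2 / 2)"
    by (simp add: power2_eq_square power4_eq_xxxx)
  also have "\<dots> \<le> norm (X^2 + \<alpha>) * norm (X^2 + \<beta>)"
    using norm_power2_add_ge[OF assms(2)] norm_power2_add_ge[OF assms(3)] by (intro mult_mono) auto
  finally have denom: "norm X ^ 4 / 4 \<le> norm ((X^2 + \<alpha>) * (X^2 + \<beta>))"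
    by (simp add: norm_mult)
  have "norm (centred_kernel \<alpha> \<beta> X) = 2 * norm X * norm (\<beta> - \<alpha>) / norm ((X^2 + \<alpha>) * (X^2 + \<beta>))"
    unfolding centred_kernel_def by (simp add: norm_mult norm_divide)
  also have "\<dots> \<le> 2 * norm X * norm (\<beta> - \<alpha>) / (norm X ^ 4 / 4)"
    using denom pos4 by (intro divide_left_mono mult_pos_pos) auto
  also have "\<dots> = 8 * norm (\<beta> - \<alpha>) / norm X ^ 3"
    using pos by (simp add: field_simps power3_eq_cube power4_eq_xxxx)
  finally show ?thesis .
qed

lemma centred_kernel_diff_eq:
  fixes X \<alpha> \<beta> :: complex
  assumes "X^2 + \<alpha> \<noteq> 0" "X^2 + \<beta> \<noteq> 0" "(X + 1)^2 + \<alpha> \<noteq> 0" "(X + 1)^2 + \<beta> \<noteq> 0"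
  shows "centred_kernel \<alpha> \<beta> X - centred_kernel \<alpha> \<beta> (X + 1) = 2 * (\<beta> - \<alpha>) *
     (X * (X + 1) * (X^2 + X * (X + 1) + (X + 1)^2) + (\<alpha> + \<beta>) * X * (X + 1) - \<alpha> * \<beta>) /
     ((X^2 + \<alpha>) * (X^2 + \<beta>) * ((X + 1)^2 + \<alpha>) * ((X + 1)^2 + \<beta>))"
proof -
  have "(X^2 + \<alpha>) * (X^2 + \<beta>) \<noteq> 0" "((X + 1)^2 + \<alpha>) * ((X + 1)^2 + \<beta>) \<noteq> 0"
    using assms by auto
  from diff_frac_eq[OF this, of "2 * X * (\<beta> - \<alpha>)" "2 * (X + 1) * (\<beta> - \<alpha>)"]
  have "centred_kernel \<alpha> \<beta> X - centred_kernel \<alpha> \<beta> (X + 1)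
      = (2 * X * (\<beta> - \<alpha>) * (((X + 1)^2 + \<alpha>) * ((X + 1)^2 + \<beta>))
         - 2 * (X + 1) * (\<beta> - \<alpha>) * ((X^2 + \<alpha>) * (X^2 + \<beta>)))
        / ((X^2 + \<alpha>) * (X^2 + \<beta>) * (((X + 1)^2 + \<alpha>) * ((X + 1)^2 + \<beta>)))"
    unfolding centred_kernel_def .
  also have "2 * X * (\<beta> - \<alpha>) * (((X + 1)^2 + \<alpha>) * ((X + 1)^2 + \<beta>))
        - 2 * (X + 1) * (\<beta> - \<alpha>) * ((X^2 + \<alpha>) * (X^2 + \<beta>))
      = 2 * (\<beta> - \<alpha>) *
        (X * (X + 1) * (X^2 + X * (X + 1) + (X + 1)^2) + (\<alpha> + \<beta>) * X * (X + 1) - \<alpha> * \<beta>)"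
    by algebra
  finally show ?thesis
    by (simp add: mult_ac)
qed

lemma norm_centred_kernel_diff_numerator_le:
  fixes X Y \<alpha> \<beta> :: complex
  assumes X: "norm X \<ge> 1" and Y: "norm Y \<le> 2 * norm X"
  shows "norm (X * Y * (X^2 + X * Y + Y^2) + (\<alpha> + \<beta>) * X * Y - \<alpha> * \<beta>)
       \<le> (14 + 2 * norm (\<alpha> + \<beta>) + norm (\<alpha> * \<beta>)) * norm X ^ 4"
proof -
  define x where "x = norm X"
  have x: "x \<ge> 1"
    using X by (simp add: x_def)
  have "norm (X^2 + X * Y + Y^2) \<le> norm (X^2 + X * Y) + norm (Y^2)"
    by (rule norm_triangle_ineq)
  also have "\<dots> \<le> x^2 + x * norm Y + norm Y ^ 2"
    using norm_triangle_ineq[of "X^2" "X * Y"] by (simp add: x_def norm_mult norm_power)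
  also have "\<dots> \<le> x^2 + x * (2 * x) + (2 * x)^2"
    using Y x by (intro add_mono mult_left_mono power_mono) (auto simp: x_def)
  finally have "norm (X^2 + X * Y + Y^2) \<le> 7 * x^2"
    by (simp add: power2_eq_square)
  then have "x * norm Y * norm (X^2 + X * Y + Y^2) \<le> x * (2 * x) * (7 * x^2)"
    using Y x by (intro mult_mono) (auto simp: x_def)
  then have cubic: "norm (X * Y * (X^2 + X * Y + Y^2)) \<le> 14 * x^4"
    by (simp add: norm_mult x_def power2_eq_square power4_eq_xxxx)
  have "norm ((\<alpha> + \<beta>) * X * Y) \<le> norm (\<alpha> + \<beta>) * (2 * x^2)"
    using mult_left_mono[OF Y, of "norm (\<alpha> + \<beta>) * x"]
    by (simp add: norm_mult x_def power2_eq_square mult_ac)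
  also have "\<dots> \<le> norm (\<alpha> + \<beta>) * (2 * x^4)"
    using x by (intro mult_left_mono) (auto intro: power_increasing)
  finally have quadratic: "norm ((\<alpha> + \<beta>) * X * Y) \<le> 2 * norm (\<alpha> + \<beta>) * x^4"
    by simp
  have absolute: "norm (\<alpha> * \<beta>) \<le> norm (\<alpha> * \<beta>) * x^4"
    using mult_left_mono[OF one_le_power[OF x, of 4], of "norm (\<alpha> * \<beta>)"] by simp
  have "norm (X * Y * (X^2 + X * Y + Y^2) + (\<alpha> + \<beta>) * X * Y - \<alpha> * \<beta>)
      \<le> norm (X * Y * (X^2 + X * Y + Y^2)) + norm ((\<alpha> + \<beta>) * X * Y) + norm (\<alpha> * \<beta>)"
    by (rule order_trans[OF norm_triangle_ineq4 add_right_mono[OF norm_triangle_ineq]])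
  then show ?thesis
    using cubic quadratic absolute by (simp add: x_def algebra_simps)
qed

lemma norm_centred_kernel_diff_le:
  fixes X \<alpha> \<beta> :: complex
  assumes X: "norm X \<ge> 1" and \<alpha>: "norm X ^ 2 \<ge> 2 * norm \<alpha>" and \<beta>: "norm X ^ 2 \<ge> 2 * norm \<beta>"
    and "Re X \<ge> 0"
  shows "norm (centred_kernel \<alpha> \<beta> X - centred_kernel \<alpha> \<beta> (X + 1))
       \<le> 32 * norm (\<beta> - \<alpha>) * (14 + 2 * norm (\<alpha> + \<beta>) + norm (\<alpha> * \<beta>)) / norm X ^ 4"
proof -
  define Y where "Y = X + 1"
  define Q where "Q = 14 + 2 * norm (\<alpha> + \<beta>) + norm (\<alpha> * \<beta>)"
  have pos: "norm X > 0"
    using X by linarith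
  have "norm Y ^ 2 = (Re X + 1)^2 + (Im X)^2" "norm X ^ 2 = (Re X)^2 + (Im X)^2"
    by (simp_all add: Y_def cmod_power2)
  then have "norm X ^ 2 \<le> norm Y ^ 2"
    using \<open>Re X \<ge> 0\<close> by (simp add: power2_eq_square algebra_simps)
  then have \<alpha>Y: "norm Y ^ 2 \<ge> 2 * norm \<alpha>" and \<beta>Y: "norm Y ^ 2 \<ge> 2 * norm \<beta>"
    using \<alpha> \<beta> by linarith+
  have Y: "norm Y \<le> 2 * norm X"
    using norm_triangle_ineq[of X 1] X by (simp add: Y_def)
  have lower: "norm (X^2 + \<alpha>) \<ge> norm X ^ 2 / 2" "norm (X^2 + \<beta>) \<ge> norm X ^ 2 / 2"
    "norm (Y^2 + \<alpha>) \<ge> norm X ^ 2 / 2" "norm (Y^2 + \<beta>) \<ge> norm X ^ 2 / 2"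
    using norm_power2_add_ge[OF \<alpha>] norm_power2_add_ge[OF \<beta>] norm_power2_add_ge[OF \<alpha>Y]
      norm_power2_add_ge[OF \<beta>Y] \<open>norm X ^ 2 \<le> norm Y ^ 2\<close> by linarith+
  have half_pos: "norm X ^ 2 / 2 > 0"
    using pos by simp
  then have nonzero: "X^2 + \<alpha> \<noteq> 0" "X^2 + \<beta> \<noteq> 0" "Y^2 + \<alpha> \<noteq> 0" "Y^2 + \<beta> \<noteq> 0"
    using lower by auto
  have "norm X ^ 8 / 16 = (norm X ^ 2 / 2) * (norm X ^ 2 / 2) * (norm X ^ 2 / 2) * (norm X ^ 2 / 2)"
    by (simp add: numeral_eq_Suc)
  also have "\<dots> \<le> norm (X^2 + \<alpha>) * norm (X^2 + \<beta>) * norm (Y^2 + \<alpha>) * norm (Y^2 + \<beta>)"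
    using lower half_pos by (intro mult_mono) auto
  finally have denom: "norm ((X^2 + \<alpha>) * (X^2 + \<beta>) * (Y^2 + \<alpha>) * (Y^2 + \<beta>)) \<ge> norm X ^ 8 / 16"
    by (simp add: norm_mult)
  have "centred_kernel \<alpha> \<beta> X - centred_kernel \<alpha> \<beta> (X + 1) = 2 * (\<beta> - \<alpha>) *
      (X * Y * (X^2 + X * Y + Y^2) + (\<alpha> + \<beta>) * X * Y - \<alpha> * \<beta>) /
      ((X^2 + \<alpha>) * (X^2 + \<beta>) * (Y^2 + \<alpha>) * (Y^2 + \<beta>))"
    unfolding Y_def by (rule centred_kernel_diff_eq) (use nonzero in \<open>simp_all add: Y_def\<close>)
  then have "norm (centred_kernel \<alpha> \<beta> X - centred_kernel \<alpha> \<beta> (X + 1)) = 2 * norm (\<beta> - \<alpha>) *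
      norm (X * Y * (X^2 + X * Y + Y^2) + (\<alpha> + \<beta>) * X * Y - \<alpha> * \<beta>) /
      norm ((X^2 + \<alpha>) * (X^2 + \<beta>) * (Y^2 + \<alpha>) * (Y^2 + \<beta>))"
    by (simp only: norm_mult norm_divide) simp
  also have "\<dots> \<le> 2 * norm (\<beta> - \<alpha>) * (Q * norm X ^ 4) / (norm X ^ 8 / 16)"
    using norm_centred_kernel_diff_numerator_le[OF X Y, of \<alpha> \<beta>] denom pos
    by (intro frac_le mult_left_mono) (auto simp: Q_def)
  also have "\<dots> = 32 * norm (\<beta> - \<alpha>) * Q / norm X ^ 4"
    using pos by (simp add: field_simps numeral_eq_Suc)
  finally show ?thesis
    unfolding Q_def .
qed

lemma divide_power_le_divide_power:
  fixes a y z :: real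
  assumes "0 \<le> a" "0 < y" "y \<le> z"
  shows "a / z ^ k \<le> a / y ^ k"
  using assms by (intro divide_left_mono power_mono mult_pos_pos) (auto intro: order_less_le_trans)

lemma of_nat_add_half_bounds:
  fixes v \<alpha> \<beta> :: complex
  assumes j: "real j \<ge> 3 + \<bar>Re v\<bar> + 8 * norm \<alpha> + 8 * norm \<beta>"
  defines "X \<equiv> of_nat j + v / 2"
  shows "Re X \<ge> 0" "(real j - 1) / 2 \<le> norm X" "norm X \<ge> 1"
    "norm X ^ 2 \<ge> 2 * norm \<alpha>" "norm X ^ 2 \<ge> 2 * norm \<beta>"
proof -
  have ReX: "2 * Re X = 2 * real j + Re v"
    unfolding X_def by simp
  note nonneg = abs_ge_minus_self[of "Re v"] norm_ge_zero[of \<alpha>] norm_ge_zero[of \<beta>]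
  show "Re X \<ge> 0"
    using ReX j nonneg by linarith
  have "real j - 1 \<le> 2 * norm X"
    using ReX j nonneg complex_Re_le_cmod[of X] by linarith
  then show "(real j - 1) / 2 \<le> norm X"
    by simp
  show X1: "norm X \<ge> 1"
    using \<open>real j - 1 \<le> 2 * norm X\<close> j nonneg by linarith
  have "norm X ^ 2 \<ge> norm X"
    using mult_left_mono[OF X1, of "norm X"] by (simp add: power2_eq_square)
  then show "norm X ^ 2 \<ge> 2 * norm \<alpha>" "norm X ^ 2 \<ge> 2 * norm \<beta>"
    using \<open>real j - 1 \<le> 2 * norm X\<close> j nonneg by linarith+
qed

lemma recip_kernel_decay:
  fixes s t r w v :: complex
  assumes st: "s + t = v" and rw: "r + w = v"
    and "s \<notin> \<int>\<^sub>\<le>\<^sub>0" "t \<notin> \<int>\<^sub>\<le>\<^sub>0" "r \<notin> \<int>\<^sub>\<le>\<^sub>0" "w \<notin> \<int>\<^sub>\<le>\<^sub>0"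
  obtains C j\<^sub>0 where "j\<^sub>0 \<ge> 2" "C \<ge> 0"
    "\<And>j. j \<ge> j\<^sub>0 \<Longrightarrow> norm (recip_kernel s t r w j) \<le> C / (real j - 1)^3"
    "\<And>j. j \<ge> j\<^sub>0 \<Longrightarrow> norm (recip_kernel s t r w j - recip_kernel s t r w (Suc j)) \<le> C / (real j - 1)^4"
proof -
  define \<alpha> where "\<alpha> = s * t - v^2 / 4"
  define \<beta> where "\<beta> = r * w - v^2 / 4"
  define j\<^sub>0 where "j\<^sub>0 = nat \<lceil>3 + \<bar>Re v\<bar> + 8 * norm \<alpha> + 8 * norm \<beta>\<rceil>"
  define C where "C = 512 * norm (\<beta> - \<alpha>) * (15 + 2 * norm (\<alpha> + \<beta>) + norm (\<alpha> * \<beta>))"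
  have kernel: "recip_kernel s t r w j = centred_kernel \<alpha> \<beta> (of_nat j + v / 2)" for j
    unfolding \<alpha>_def \<beta>_def
    by (rule recip_kernel_eq_centred_kernel[OF st rw]) (use assms in \<open>simp_all add: add_of_nat_neq_0_if_notin_nonpos_Ints\<close>)
  have j\<^sub>0: "real j\<^sub>0 \<ge> 3 + \<bar>Re v\<bar> + 8 * norm \<alpha> + 8 * norm \<beta>"
    unfolding j\<^sub>0_def by (rule real_nat_ceiling_ge)
  then have "real j\<^sub>0 \<ge> 3"
    using abs_ge_zero[of "Re v"] norm_ge_zero[of \<alpha>] norm_ge_zero[of \<beta>] by linarith
  then have "j\<^sub>0 \<ge> 2"
    by simp
  have C: "C = 512 * norm (\<beta> - \<alpha>) * (14 + 2 * norm (\<alpha> + \<beta>) + norm (\<alpha> * \<beta>)) + 512 * norm (\<beta> - \<alpha>)"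
    by (simp add: C_def algebra_simps)
  have "0 \<le> 512 * norm (\<beta> - \<alpha>) * (14 + 2 * norm (\<alpha> + \<beta>) + norm (\<alpha> * \<beta>))"
    by simp
  then have C_ge: "64 * norm (\<beta> - \<alpha>) \<le> C" "512 * norm (\<beta> - \<alpha>) * (14 + 2 * norm (\<alpha> + \<beta>) + norm (\<alpha> * \<beta>)) \<le> C"
    unfolding C by simp_all
  have "C \<ge> 0"
    using C_ge(1) norm_ge_zero[of "\<beta> - \<alpha>"] by linarith
  have bound: "norm (recip_kernel s t r w j) \<le> C / (real j - 1)^3" if "j \<ge> j\<^sub>0" for j
  proof -
    note X = of_nat_add_half_bounds[of v \<alpha> \<beta> j]
    have j: "real j \<ge> 3 + \<bar>Re v\<bar> + 8 * norm \<alpha> + 8 * norm \<beta>"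
      using j\<^sub>0 that by linarith
    have "real j - 1 > 0"
      using that \<open>real j\<^sub>0 \<ge> 3\<close> by linarith
    have "norm (recip_kernel s t r w j) \<le> 8 * norm (\<beta> - \<alpha>) / norm (of_nat j + v / 2) ^ 3"
      unfolding kernel by (rule norm_centred_kernel_le[OF X(3-5)[OF j]])
    also have "\<dots> \<le> 8 * norm (\<beta> - \<alpha>) / ((real j - 1) / 2) ^ 3"
      using j \<open>real j - 1 > 0\<close> by (intro divide_power_le_divide_power X(2)) auto
    also have "\<dots> = 64 * norm (\<beta> - \<alpha>) / (real j - 1)^3"
      by (simp add: power_divide)
    also have "\<dots> \<le> C / (real j - 1)^3"
      using \<open>real j - 1 > 0\<close> C_ge by (intro divide_right_mono) auto
    finally show ?thesis .
  qed
  have diff_bound: "norm (recip_kernel s t r w j - recip_kernel s t r w (Suc j)) \<le> C / (real j - 1)^4"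
    if "j \<ge> j\<^sub>0" for j
  proof -
    note X = of_nat_add_half_bounds[of v \<alpha> \<beta> j]
    have j: "real j \<ge> 3 + \<bar>Re v\<bar> + 8 * norm \<alpha> + 8 * norm \<beta>"
      using j\<^sub>0 that by linarith
    have "real j - 1 > 0"
      using that \<open>real j\<^sub>0 \<ge> 3\<close> by linarith
    have "of_nat (Suc j) + v / 2 = (of_nat j + v / 2) + 1"
      by simp
    then have "norm (recip_kernel s t r w j - recip_kernel s t r w (Suc j))
        \<le> 32 * norm (\<beta> - \<alpha>) * (14 + 2 * norm (\<alpha> + \<beta>) + norm (\<alpha> * \<beta>)) / norm (of_nat j + v / 2) ^ 4"
      unfolding kernel by (simp only:) (rule norm_centred_kernel_diff_le[OF X(3-5,1)[OF j]])
    also have "\<dots> \<le> 32 * norm (\<beta> - \<alpha>) * (14 + 2 * norm (\<alpha> + \<beta>) + norm (\<alpha> * \<beta>)) / ((real j - 1) / 2) ^ 4"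
      using j \<open>real j - 1 > 0\<close> by (intro divide_power_le_divide_power X(2)) auto
    also have "\<dots> = 512 * norm (\<beta> - \<alpha>) * (14 + 2 * norm (\<alpha> + \<beta>) + norm (\<alpha> * \<beta>)) / (real j - 1)^4"
      by (simp add: power_divide)
    also have "\<dots> \<le> C / (real j - 1)^4"
      using \<open>real j - 1 > 0\<close> C_ge by (intro divide_right_mono) auto
    finally show ?thesis .
  qed
  show ?thesis
    using \<open>j\<^sub>0 \<ge> 2\<close> \<open>C \<ge> 0\<close> bound diff_bound by (rule that)
qed

section \<open>Bounds for the truncation weights\<close>

lemma trunc_weight_0 [simp]: "trunc_weight v N 0 = 1"
  by (simp add: trunc_weight_def)

lemma trunc_weight_Suc: "trunc_weight v N (Suc j) = trunc_weight v N j * trunc_factor v N j"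
  by (simp add: trunc_weight_def)

lemma trunc_weight_eq_0: "N < j \<Longrightarrow> trunc_weight v N j = 0"
  unfolding trunc_weight_def by (rule prod_zero) (auto intro!: bexI[of _ N] simp: trunc_factor_def)

lemma trunc_factor_tendsto_1:
  fixes v :: complex
  shows "(\<lambda>N. trunc_factor v N i) \<longlonglongrightarrow> 1"
proof -
  have "(\<lambda>N. (1 - of_nat i / of_nat N) / (1 + (v + 1 + of_nat i) / of_nat N)) \<longlonglongrightarrow> (1 - 0) / (1 + 0 :: complex)"
    by (intro tendsto_intros lim_const_over_n) simp
  moreover have "eventually (\<lambda>N. (1 - of_nat i / of_nat N) / (1 + (v + 1 + of_nat i) / of_nat N)
      = trunc_factor v N i) sequentially"
    using eventually_gt_at_top[of 0]
  proof eventually_elim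
    case (elim N)
    then have "(of_nat N :: complex) \<noteq> 0"
      by simp
    then have "1 - of_nat i / of_nat N = (of_nat N - of_nat i) / (of_nat N :: complex)"
      "1 + (v + 1 + of_nat i) / of_nat N = (v + of_nat N + 1 + of_nat i) / (of_nat N :: complex)"
      by (simp_all add: field_simps)
    with \<open>of_nat N \<noteq> 0\<close> show ?case
      unfolding trunc_factor_def by simp
  qed
  ultimately show ?thesis
    by (simp add: Lim_transform_eventually)
qed

lemma trunc_weight_tendsto_1:
  fixes v :: complex
  shows "(\<lambda>N. trunc_weight v N j) \<longlonglongrightarrow> 1"
proof -
  have "(\<lambda>N. \<Prod>i<j. trunc_factor v N i) \<longlonglongrightarrow> (\<Prod>i<j. 1 :: complex)"
    by (intro tendsto_prod trunc_factor_tendsto_1)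
  then show ?thesis
    by (simp add: trunc_weight_def)
qed

lemma norm_trunc_factor_eq:
  fixes v :: complex
  shows "norm (trunc_factor v N i) = \<bar>real N - real i\<bar> / norm (v + of_nat N + 1 + of_nat i)"
proof -
  have "(of_nat N - of_nat i :: complex) = of_real (real N - real i)"
    by simp
  then show ?thesis
    unfolding trunc_factor_def norm_divide by (simp only: norm_of_real)
qed

lemma norm_trunc_factor_denom_ge:
  fixes v :: complex
  shows "norm (v + of_nat N + 1 + of_nat i) \<ge> Re v + real N + 1 + real i"
  using complex_Re_le_cmod[of "v + of_nat N + 1 + of_nat i"] by simp

lemma norm_trunc_factor_le_1:
  fixes v :: complex
  assumes "Re v \<ge> -1"
  shows "norm (trunc_factor v N i) \<le> 1"
proof -
  have "\<bar>real N - real i\<bar> \<le> norm (v + of_nat N + 1 + of_nat i)"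
    using norm_trunc_factor_denom_ge[of v N i] assms by linarith
  then show ?thesis
    unfolding norm_trunc_factor_eq by (simp add: divide_le_eq_1)
qed

lemma norm_trunc_weight_le_1:
  fixes v :: complex
  assumes "Re v \<ge> -1"
  shows "norm (trunc_weight v N j) \<le> 1"
  unfolding trunc_weight_def prod_norm[symmetric]
  by (rule prod_le_1) (use norm_trunc_factor_le_1[OF assms] in auto)

lemma norm_trunc_factor_le_linear:
  fixes v :: complex
  assumes "Re v \<ge> -1" "i \<le> N" "N \<ge> 1"
  shows "norm (trunc_factor v N i) \<le> 1 - real i / real N"
proof -
  have denom: "norm (v + of_nat N + 1 + of_nat i) \<ge> real N"
    using norm_trunc_factor_denom_ge[of v N i] assms by linarith
  have "real N > 0"
    using assms by simp
  have "norm (trunc_factor v N i) = (real N - real i) / norm (v + of_nat N + 1 + of_nat i)"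
    using assms by (simp add: norm_trunc_factor_eq)
  also have "\<dots> \<le> (real N - real i) / real N"
    using denom \<open>real N > 0\<close> assms by (intro divide_left_mono mult_pos_pos) auto
  also have "\<dots> = 1 - real i / real N"
    using \<open>real N > 0\<close> by (simp add: field_simps)
  finally show ?thesis .
qed

text \<open>Weierstrass' product inequality \<open>\<Prod>(1 - a\<^sub>i) (1 + \<Sum>a\<^sub>i) \<le> 1\<close> for \<open>a\<^sub>i = i/N\<close>.\<close>

lemma norm_trunc_weight_quadratic_bound:
  fixes v :: complex
  assumes "Re v \<ge> -1" "j \<le> N" "N \<ge> 1"
  shows "norm (trunc_weight v N j) * (1 + real j * (real j - 1) / (2 * real N)) \<le> 1"
  using assms(2)
proof (induction j)
  case 0
  then show ?case by simp
next
  case (Suc j)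
  define p where "p = norm (trunc_weight v N j)"
  define a where "a = real j / real N"
  define S where "S = real j * (real j - 1) / (2 * real N)"
  have "real N > 0"
    using assms by simp
  have IH: "p * (1 + S) \<le> 1"
    using Suc by (simp add: p_def S_def)
  have "p \<ge> 0" "a \<ge> 0"
    using \<open>real N > 0\<close> by (simp_all add: p_def a_def)
  have "S \<ge> 0"
    using \<open>real N > 0\<close> by (cases j) (simp_all add: S_def)
  have step: "norm (trunc_weight v N (Suc j)) \<le> p * (1 - a)"
    unfolding trunc_weight_Suc norm_mult p_def a_def
    using norm_trunc_factor_le_linear[OF assms(1) _ assms(3), of j] Suc.prems by (intro mult_left_mono) auto
  have S_Suc: "real (Suc j) * (real (Suc j) - 1) / (2 * real N) = S + a"
    using \<open>real N > 0\<close> by (simp add: S_def a_def field_simps)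
  have "norm (trunc_weight v N (Suc j)) * (1 + (S + a)) \<le> p * (1 - a) * (1 + (S + a))"
    using step \<open>S \<ge> 0\<close> \<open>a \<ge> 0\<close> by (intro mult_right_mono) auto
  also have "\<dots> = p * (1 + S) - p * a * (S + a)"
    by (simp add: algebra_simps)
  also have "\<dots> \<le> p * (1 + S)"
    using \<open>p \<ge> 0\<close> \<open>a \<ge> 0\<close> \<open>S \<ge> 0\<close> by simp
  also have "\<dots> \<le> 1"
    by (rule IH)
  finally show ?case
    using S_Suc by simp
qed

lemma norm_trunc_weight_decay:
  fixes v :: complex
  assumes "Re v \<ge> -1" "2 \<le> j"
  shows "norm (trunc_weight v N j) * (real j + 1) / real N \<le> 3 / (real j - 1)"
proof (cases "j \<le> N")
  case False
  then show ?thesis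
    using assms by (simp add: trunc_weight_eq_0)
next
  case True
  define p where "p = norm (trunc_weight v N j)"
  have "real N > 0" "real j - 1 > 0"
    using True assms by simp_all
  have "p * (1 + real j * (real j - 1) / (2 * real N)) \<le> 1"
    unfolding p_def using True assms by (intro norm_trunc_weight_quadratic_bound) auto
  moreover have "p * (real j * (real j - 1) / (2 * real N))
      \<le> p * (1 + real j * (real j - 1) / (2 * real N))"
    by (intro mult_left_mono) (simp_all add: p_def)
  ultimately have "p * (real j * (real j - 1) / (2 * real N)) \<le> 1"
    by linarith
  then have "p / real N \<le> 2 / (real j * (real j - 1))"
    using \<open>real N > 0\<close> \<open>real j - 1 > 0\<close> assms by (simp add: field_simps)
  then have "p * (real j + 1) / real N \<le> 2 / (real j * (real j - 1)) * (real j + 1)"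
    by (simp add: mult_right_mono divide_right_mono times_divide_eq_left[symmetric]
        del: times_divide_eq_left)
  also have "\<dots> \<le> 3 / (real j - 1)"
  proof -
    have "(real j - 1) * (real j - 2) \<ge> 0"
      using assms by (intro mult_nonneg_nonneg) auto
    then have "real j * 3 \<le> 2 + real j * real j" "2 * (real j + 1) \<le> 3 * real j"
      using assms by (auto simp: algebra_simps)
    then show ?thesis
      using \<open>real j - 1 > 0\<close> assms by (simp add: field_simps)
  qed
  finally show ?thesis
    by (simp add: p_def)
qed

lemma norm_trunc_factor_le_2:
  fixes v :: complex
  assumes "real N \<ge> 2 * \<bar>Re v\<bar> + 2"
  shows "norm (trunc_factor v N i) \<le> (if real i \<ge> \<bar>Re v\<bar> then 1 else 2)"
proof -
  define d where "d = norm (v + of_nat N + 1 + of_nat i)"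
  have d: "d \<ge> Re v + real N + 1 + real i"
    unfolding d_def by (rule norm_trunc_factor_denom_ge)
  have "d > 0"
    using d assms by linarith
  have "\<bar>real N - real i\<bar> \<le> (if real i \<ge> \<bar>Re v\<bar> then 1 else 2) * d"
    using d assms by (auto simp: abs_if)
  then show ?thesis
    unfolding norm_trunc_factor_eq d_def[symmetric] using \<open>d > 0\<close> by (simp add: divide_le_eq)
qed

lemma trunc_weight_bounded:
  fixes v :: complex
  obtains B N\<^sub>0 where "\<And>N j. N \<ge> N\<^sub>0 \<Longrightarrow> norm (trunc_weight v N j) \<le> B"
proof -
  define L where "L = nat \<lceil>\<bar>Re v\<bar>\<rceil>"
  define N\<^sub>0 where "N\<^sub>0 = nat \<lceil>2 * \<bar>Re v\<bar> + 2\<rceil>"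
  have bound: "norm (trunc_weight v N j) \<le> 2 ^ min j L" if "N \<ge> N\<^sub>0" for N j
  proof (induction j)
    case 0
    then show ?case by simp
  next
    case (Suc j)
    have "real N \<ge> 2 * \<bar>Re v\<bar> + 2"
      using that unfolding N\<^sub>0_def by linarith
    note factor = norm_trunc_factor_le_2[OF this, of j]
    show ?case
    proof (cases "j < L")
      case True
      then have "norm (trunc_weight v N j) * norm (trunc_factor v N j) \<le> 2 ^ min j L * 2"
        using Suc.IH factor by (intro mult_mono) (auto split: if_splits)
      with True show ?thesis
        unfolding trunc_weight_Suc norm_mult by simp
    next
      case False
      then have "real j \<ge> \<bar>Re v\<bar>"
        unfolding L_def by linarith
      then have "norm (trunc_factor v N j) \<le> 1"
        using factor by simp
      then have "norm (trunc_weight v N j) * norm (trunc_factor v N j) \<le> 2 ^ min j L * 1"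
        using Suc.IH by (intro mult_mono) auto
      with False show ?thesis
        unfolding trunc_weight_Suc norm_mult by simp
    qed
  qed
  have "(2::real) ^ min j L \<le> 2 ^ L" for j
    by (intro power_increasing) auto
  then show ?thesis
    using bound by (intro that[of N\<^sub>0 "2 ^ L"]) (meson order_trans)
qed

lemma gbinomial_Suc_eq:
  fixes a :: "'a::field_char_0"
  shows "a gchoose Suc k = (a gchoose k) * ((a - of_nat k) / of_nat (Suc k))"
  using gbinomial_mult_1[of a k] by (simp add: field_simps del: of_nat_Suc)

lemma norm_gbinomial_minus_bound:
  fixes v :: complex
  obtains M where "M \<ge> 0" "\<And>j. j \<ge> 2 \<Longrightarrow> norm ((- v) gchoose j) \<le> M * (real j - 1) powr (Re v - 1)"
proof -
  have "Bseq (rGamma_series v)"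
    using rGamma_series_LIMSEQ[of v] by (intro convergent_imp_Bseq convergentI)
  then obtain K where K: "K > 0" "\<And>n. norm (rGamma_series v n) \<le> K"
    unfolding Bseq_def by blast
  have "norm ((- v) gchoose Suc n) \<le> K * real n powr (Re v - 1)" if n: "n \<ge> 1" for n
  proof -
    define E where "E = exp (v * of_real (ln (of_nat n)))"
    have "norm E = real n powr Re v"
      unfolding E_def norm_exp_eq_Re using n by (simp add: powr_def)
    moreover have "pochhammer v (Suc n) = rGamma_series v n * (fact n * E)"
      unfolding rGamma_series_def E_def by simp
    ultimately have "norm (pochhammer v (Suc n)) \<le> K * (fact n * real n powr Re v)"
      using K(2)[of n] by (simp add: norm_mult mult_right_mono)
    moreover have "norm (fact (Suc n) :: complex) = fact (Suc n)"
      by (metis norm_of_nat of_nat_fact)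
    ultimately have "norm ((- v) gchoose Suc n) \<le> K * (fact n * real n powr Re v) / fact (Suc n)"
      unfolding gbinomial_pochhammer norm_divide norm_mult
      by (simp add: norm_power divide_right_mono del: fact_Suc)
    also have "\<dots> = K * real n powr Re v / (real n + 1)"
    proof -
      have "(fact (Suc n) :: real) = fact n * (real n + 1)"
        by (simp add: algebra_simps)
      moreover have "fact n > (0::real)"
        by simp
      ultimately show ?thesis
        by (simp add: mult.left_commute[of K])
    qed
    also have "\<dots> \<le> K * real n powr Re v / real n"
      using n K by (intro divide_left_mono mult_nonneg_nonneg) auto
    also have "\<dots> = K * real n powr (Re v - 1)"
      using n by (simp add: powr_diff)
    finally show ?thesis .
  qed
  then have bound: "norm ((- v) gchoose j) \<le> K * (real j - 1) powr (Re v - 1)" if "j \<ge> 2" for j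
  proof -
    obtain n where "j = Suc n" "n \<ge> 1"
      using \<open>j \<ge> 2\<close> by (cases j) auto
    with \<open>\<And>n. n \<ge> 1 \<Longrightarrow> _\<close>[of n] show ?thesis
      by simp
  qed
  show ?thesis
    using less_imp_le[OF K(1)] bound by (rule that)
qed

section \<open>Passing to the limit\<close>

lemma summable_shifted_powr:
  fixes e c :: real
  assumes "e < -1"
  shows "summable (\<lambda>k. c * (real k - 1) powr e)"
proof -
  have "summable (\<lambda>k. c * (real (k + 1) - 1) powr e)"
    using assms by (simp add: summable_real_powr_iff)
  then show ?thesis
    by (subst summable_iff_shift[of _ 1, symmetric])
qed

lemma powr_divide_power:
  fixes x e :: real
  assumes "x > 0"
  shows "x powr e / x ^ n = x powr (e - real n)"
  using assms by (simp add: powr_diff powr_realpow)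

lemma truncated_sum_sums:
  fixes u f :: "nat \<Rightarrow> complex"
  shows "(\<lambda>k. u k * trunc_weight v N k * f k) sums (\<Sum>j\<le>N. u j * trunc_weight v N j * f j)"
  by (rule sums_finite) (auto simp: trunc_weight_eq_0)

lemma tannery_sums:
  fixes a :: "nat \<Rightarrow> nat \<Rightarrow> complex"
  assumes "\<And>k. (\<lambda>N. a k N) \<longlonglongrightarrow> b k"
    and "\<And>k N. k \<ge> k\<^sub>0 \<Longrightarrow> N \<ge> N\<^sub>0 \<Longrightarrow> norm (a k N) \<le> M k" and "summable M"
    and "\<And>N. (\<lambda>k. a k N) sums S N"
  shows "summable b" "S \<longlonglongrightarrow> suminf b"
proof -
  have "eventually (\<lambda>(k, N). norm (a k N) \<le> M k) (at_top \<times>\<^sub>F sequentially)"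
    unfolding eventually_prod_sequentially
    by (rule exI[of _ "max k\<^sub>0 N\<^sub>0"]) (auto intro!: assms(2))
  from tannerys_theorem[OF assms(1) this assms(3)]
  have "summable (\<lambda>k. norm (b k))" "(\<lambda>N. suminf (\<lambda>k. a k N)) \<longlonglongrightarrow> suminf b"
    by auto
  then show "summable b" "S \<longlonglongrightarrow> suminf b"
    using assms(4) by (auto simp: summable_norm_cancel sums_iff)
qed

lemma gbinomial_kernel_sums_of_Re_less_3:
  fixes s t r w v :: complex
  assumes st: "s + t = v" and rw: "r + w = v" and v: "v \<notin> \<int>\<^sub>\<le>\<^sub>0"
    and strw: "s \<notin> \<int>\<^sub>\<le>\<^sub>0" "t \<notin> \<int>\<^sub>\<le>\<^sub>0" "r \<notin> \<int>\<^sub>\<le>\<^sub>0" "w \<notin> \<int>\<^sub>\<le>\<^sub>0"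
    and "Re v < 3"
  shows "(\<lambda>j. ((- v) gchoose j) * recip_kernel s t r w j) sums ((Gamma s * Gamma t - Gamma r * Gamma w) * rGamma v)"
proof -
  obtain U where "U \<ge> 0" and U: "\<And>j. j \<ge> 2 \<Longrightarrow> norm ((- v) gchoose j) \<le> U * (real j - 1) powr (Re v - 1)"
    using norm_gbinomial_minus_bound[of v] by metis
  obtain B N\<^sub>0 where B: "\<And>N j. N \<ge> N\<^sub>0 \<Longrightarrow> norm (trunc_weight v N j) \<le> B"
    using trunc_weight_bounded[of v] by metis
  obtain C j\<^sub>0 where "j\<^sub>0 \<ge> 2" "C \<ge> 0" and C: "\<And>j. j \<ge> j\<^sub>0 \<Longrightarrow> norm (recip_kernel s t r w j) \<le> C / (real j - 1)^3"
    using recip_kernel_decay[OF st rw strw] by metis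
  have "B \<ge> 0"
    using B[of N\<^sub>0 0] norm_ge_zero[of "trunc_weight v N\<^sub>0 0"] by linarith
  define a where "a k N = ((- v) gchoose k) * trunc_weight v N k * recip_kernel s t r w k" for k N
  define b where "b k = ((- v) gchoose k) * recip_kernel s t r w k" for k
  have lim: "(\<lambda>N. a k N) \<longlonglongrightarrow> b k" for k
    using tendsto_mult[OF tendsto_mult[OF tendsto_const trunc_weight_tendsto_1] tendsto_const]
    by (simp add: a_def b_def)
  have bound: "norm (a k N) \<le> U * B * C * (real k - 1) powr (Re v - 4)"
    if "k \<ge> j\<^sub>0" "N \<ge> N\<^sub>0" for k N
  proof -
    have "real k - 1 > 0"
      using that \<open>j\<^sub>0 \<ge> 2\<close> by simp
    have "norm (a k N) \<le> (U * (real k - 1) powr (Re v - 1)) * B * (C / (real k - 1)^3)"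
      unfolding a_def norm_mult
      using U[of k] B[OF that(2), of k] C[OF that(1)] that \<open>j\<^sub>0 \<ge> 2\<close> \<open>U \<ge> 0\<close> \<open>B \<ge> 0\<close>
      by (intro mult_mono) auto
    also have "\<dots> = U * B * C * ((real k - 1) powr (Re v - 1) / (real k - 1)^3)"
      by simp
    also have "\<dots> = U * B * C * (real k - 1) powr (Re v - 4)"
      using powr_divide_power[OF \<open>real k - 1 > 0\<close>, of "Re v - 1" 3] by simp
    finally show ?thesis .
  qed
  have summable: "summable (\<lambda>k. U * B * C * (real k - 1) powr (Re v - 4))"
    using \<open>Re v < 3\<close> by (intro summable_shifted_powr) simp
  have sums: "(\<lambda>k. a k N) sums (\<Sum>j\<le>N. ((- v) gchoose j) * trunc_weight v N j * recip_kernel s t r w j)" for N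
    unfolding a_def by (rule truncated_sum_sums)
  note tannery = tannery_sums[OF lim bound summable sums]
  then have "suminf b = (Gamma s * Gamma t - Gamma r * Gamma w) * rGamma v"
    using truncated_kernel_sum_tendsto[OF st rw v strw] by (blast intro: LIMSEQ_unique)
  with tannery(1) have "b sums ((Gamma s * Gamma t - Gamma r * Gamma w) * rGamma v)"
    by (metis summable_sums)
  then show ?thesis
    by (simp add: b_def[abs_def])
qed

definition weight_defect :: "complex \<Rightarrow> nat \<Rightarrow> nat \<Rightarrow> complex" where
  "weight_defect v N k = 1 - (v + of_nat k) / (of_nat k + 1) * trunc_factor v N k"

lemma gbinomial_trunc_weight_pair_eq:
  "((- v) gchoose k) * trunc_weight v N k * x + ((- v) gchoose Suc k) * trunc_weight v N (Suc k) * y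
   = ((- v) gchoose k) * (trunc_weight v N k * (x - y) + trunc_weight v N k * weight_defect v N k * y)"
proof -
  have "((- v) gchoose Suc k) = ((- v) gchoose k) * (- ((v + of_nat k) / (of_nat k + 1)))"
    unfolding gbinomial_Suc_eq by (simp add: add.commute minus_divide_left)
  then show ?thesis
    unfolding trunc_weight_Suc weight_defect_def by (simp add: algebra_simps)
qed

lemma weight_defect_eq:
  fixes v :: complex
  assumes "v + of_nat N + 1 + of_nat k \<noteq> 0"
  shows "weight_defect v N k = (of_nat N * (1 - v) + (2 * of_nat k ^ 2 + 2 * of_nat k * (v + 1) + v + 1))
    / ((of_nat k + 1) * (v + of_nat N + 1 + of_nat k))"
proof -
  define D where "D = (of_nat k + 1) * (v + of_nat N + 1 + of_nat k)"
  have "(of_nat k + 1 :: complex) \<noteq> 0"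
    by (metis of_nat_Suc of_nat_eq_0_iff add.commute nat.distinct(1))
  with assms have "D \<noteq> 0"
    by (simp add: D_def)
  have "weight_defect v N k = 1 - (v + of_nat k) * (of_nat N - of_nat k) / D"
    by (simp add: weight_defect_def trunc_factor_def D_def)
  also have "\<dots> = (D - (v + of_nat k) * (of_nat N - of_nat k)) / D"
    using \<open>D \<noteq> 0\<close> by (simp add: diff_divide_distrib)
  also have "D - (v + of_nat k) * (of_nat N - of_nat k)
      = of_nat N * (1 - v) + (2 * of_nat k ^ 2 + 2 * of_nat k * (v + 1) + v + 1)"
    by (simp add: D_def algebra_simps power2_eq_square)
  finally show ?thesis
    by (simp add: D_def)
qed

lemma norm_weight_defect_numerator_le:
  fixes v :: complex
  shows "norm (2 * of_nat k ^ 2 + 2 * of_nat k * (v + 1) + v + 1) \<le> (2 + 3 * norm (v + 1)) * (real k + 1)^2"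
proof -
  define n where "n = norm (v + 1)"
  have "norm (2 * of_nat k ^ 2 + 2 * of_nat k * (v + 1) + v + 1) \<le> 2 * real k ^ 2 + 2 * real k * n + n"
    using norm_triangle_ineq[of "2 * of_nat k ^ 2 + 2 * of_nat k * (v + 1)" "v + 1"]
      norm_triangle_ineq[of "2 * of_nat k ^ 2 :: complex" "2 * of_nat k * (v + 1)"]
    by (simp add: n_def add.assoc norm_mult norm_power)
  moreover have "real k ^ 2 \<le> (real k + 1)^2" "real k * n \<le> (real k + 1)^2 * n" "n \<le> (real k + 1)^2 * n"
    by (auto simp: n_def power2_eq_square algebra_simps intro!: mult_right_mono)
  moreover have "(2 + 3 * n) * (real k + 1)^2 = 2 * (real k + 1)^2 + 3 * ((real k + 1)^2 * n)"
    by (simp add: algebra_simps)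
  ultimately show ?thesis
    unfolding n_def[symmetric] by linarith
qed

lemma norm_trunc_weight_mult_defect_le:
  fixes v :: complex
  assumes v: "Re v \<ge> -1" and k: "k \<ge> 2"
  shows "norm (trunc_weight v N k * weight_defect v N k)
     \<le> (norm (1 - v) + 3 * (2 + 3 * norm (v + 1))) / (real k - 1)"
proof (cases "k \<le> N")
  case False
  then show ?thesis
    using k by (simp add: trunc_weight_eq_0)
next
  case True
  define G where "G = 2 + 3 * norm (v + 1)"
  define D where "D = v + of_nat N + 1 + of_nat k"
  define p where "p = norm (trunc_weight v N k)"
  define x where "x = real k - 1"
  define K where "K = real k + 1"
  have "x > 0" "real N > 0" "p \<ge> 0" "p \<le> 1" "K > 0" "x \<le> K"
    using True k norm_trunc_weight_le_1[OF v] by (simp_all add: x_def p_def K_def)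
  have "norm D \<ge> real N"
    using norm_trunc_factor_denom_ge[of v N k] v unfolding D_def by linarith
  then have "norm D > 0" "D \<noteq> 0"
    using \<open>real N > 0\<close> by auto
  have decay: "p * K / real N \<le> 3 / x"
    using norm_trunc_weight_decay[OF v k, of N] by (simp add: p_def x_def K_def)
  have numerator: "norm (of_nat N * (1 - v) + (2 * of_nat k ^ 2 + 2 * of_nat k * (v + 1) + v + 1))
      \<le> real N * norm (1 - v) + G * K^2"
    unfolding K_def using norm_triangle_ineq[of "of_nat N * (1 - v)" "2 * of_nat k ^ 2 + 2 * of_nat k * (v + 1) + v + 1"]
      norm_weight_defect_numerator_le[of k v]
    by (simp add: G_def norm_mult)
  have "norm (of_nat k + 1 :: complex) = K"
    unfolding K_def by (metis norm_of_nat of_nat_Suc of_nat_1 of_nat_add add.commute)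
  then have "norm (trunc_weight v N k * weight_defect v N k)
      = p * norm (of_nat N * (1 - v) + (2 * of_nat k ^ 2 + 2 * of_nat k * (v + 1) + v + 1))
        / (K * norm D)"
    using \<open>D \<noteq> 0\<close> by (simp add: weight_defect_eq D_def p_def norm_mult norm_divide)
  also have "\<dots> \<le> p * (real N * norm (1 - v) + G * K^2) / (K * norm D)"
    using numerator \<open>p \<ge> 0\<close> \<open>norm D > 0\<close> \<open>K > 0\<close> by (intro divide_right_mono mult_left_mono) auto
  also have "\<dots> = (p * real N / norm D) * norm (1 - v) / K + G * (p * K / norm D)"
    using \<open>norm D > 0\<close> \<open>K > 0\<close> by (simp add: field_simps power2_eq_square)
  also have "\<dots> \<le> norm (1 - v) / x + G * (3 / x)"
  proof (intro add_mono mult_left_mono)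
    have "p * real N \<le> norm D"
      using \<open>p \<le> 1\<close> \<open>p \<ge> 0\<close> \<open>norm D \<ge> real N\<close> \<open>real N > 0\<close> mult_mono[of p 1 "real N" "norm D"] by simp
    then have "p * real N / norm D \<le> 1"
      using \<open>norm D > 0\<close> by simp
    then have "(p * real N / norm D) * norm (1 - v) / K \<le> 1 * norm (1 - v) / K"
      using \<open>K > 0\<close> by (intro divide_right_mono mult_right_mono) auto
    also have "\<dots> \<le> norm (1 - v) / x"
      using \<open>x > 0\<close> \<open>x \<le> K\<close> by (auto intro!: divide_left_mono)
    finally show "(p * real N / norm D) * norm (1 - v) / K \<le> norm (1 - v) / x" .
    have "p * K / norm D \<le> p * K / real N"
      using \<open>norm D \<ge> real N\<close> \<open>real N > 0\<close> \<open>p \<ge> 0\<close> \<open>K > 0\<close> by (intro divide_left_mono mult_pos_pos) auto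
    then show "p * K / norm D \<le> 3 / x"
      using decay by linarith
  qed (simp add: G_def)
  also have "\<dots> = (norm (1 - v) + 3 * (2 + 3 * norm (v + 1))) / (real k - 1)"
    by (simp add: G_def x_def add_divide_distrib algebra_simps)
  finally show ?thesis .
qed

lemma norm_paired_terms_le:
  fixes v :: complex and f :: "nat \<Rightarrow> complex"
  assumes v: "Re v \<ge> -1" and k: "k \<ge> 2" and "U \<ge> 0" "C \<ge> 0"
    and u: "norm ((- v) gchoose k) \<le> U * (real k - 1) powr (Re v - 1)"
    and diff: "norm (f k - f (Suc k)) \<le> C / (real k - 1)^4"
    and succ: "norm (f (Suc k)) \<le> C / (real k - 1)^3"
  defines "E \<equiv> norm (1 - v) + 3 * (2 + 3 * norm (v + 1))"
  shows "norm (((- v) gchoose k) * trunc_weight v N k * f k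
             + ((- v) gchoose Suc k) * trunc_weight v N (Suc k) * f (Suc k))
       \<le> U * C * (1 + E) * (real k - 1) powr (Re v - 5)"
proof -
  define x where "x = real k - 1"
  have "x > 0"
    using k by (simp add: x_def)
  have "E \<ge> 0"
    by (simp add: E_def)
  have "norm (trunc_weight v N k * (f k - f (Suc k)) + trunc_weight v N k * weight_defect v N k * f (Suc k))
      \<le> norm (trunc_weight v N k) * norm (f k - f (Suc k))
        + norm (trunc_weight v N k * weight_defect v N k) * norm (f (Suc k))"
    by (rule order_trans[OF norm_triangle_ineq]) (simp add: norm_mult)
  also have "\<dots> \<le> 1 * (C / x^4) + (E / x) * (C / x^3)"
    using norm_trunc_weight_le_1[OF v] norm_trunc_weight_mult_defect_le[OF v k, of N] diff succ
      \<open>x > 0\<close> \<open>E \<ge> 0\<close> \<open>C \<ge> 0\<close>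
    unfolding x_def E_def by (intro add_mono mult_mono) auto
  also have "\<dots> = C * (1 + E) / x^4"
    using \<open>x > 0\<close> by (simp add: field_simps numeral_eq_Suc)
  finally have pair: "norm (trunc_weight v N k * (f k - f (Suc k))
      + trunc_weight v N k * weight_defect v N k * f (Suc k)) \<le> C * (1 + E) / x^4" .
  have "norm (((- v) gchoose k) * trunc_weight v N k * f k
             + ((- v) gchoose Suc k) * trunc_weight v N (Suc k) * f (Suc k))
      \<le> (U * x powr (Re v - 1)) * (C * (1 + E) / x^4)"
    unfolding gbinomial_trunc_weight_pair_eq norm_mult
    using u pair \<open>U \<ge> 0\<close> by (intro mult_mono) (auto simp: x_def)
  also have "\<dots> = U * C * (1 + E) * (x powr (Re v - 1) / x^4)"
    by simp
  also have "\<dots> = U * C * (1 + E) * (real k - 1) powr (Re v - 5)"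
    using powr_divide_power[OF \<open>x > 0\<close>, of "Re v - 1" 4] by (simp add: x_def)
  finally show ?thesis .
qed

lemma sums_if_paired_sums:
  fixes b :: "nat \<Rightarrow> 'a::{real_normed_field, field_char_0}"
  assumes "(\<lambda>k. b k + b (Suc k)) sums L" and "b \<longlonglongrightarrow> 0"
  shows "b sums ((L + b 0) / 2)"
proof -
  have partial: "(\<Sum>k<n. b k) = ((\<Sum>k<n. b k + b (Suc k)) + b 0 - b n) / 2" for n
  proof -
    have "(\<Sum>k<Suc n. b k) = b 0 + (\<Sum>k<n. b (Suc k))"
      by (rule sum.lessThan_Suc_shift)
    then show ?thesis
      by (simp add: sum.distrib field_simps)
  qed
  have "(\<lambda>n. ((\<Sum>k<n. b k + b (Suc k)) + b 0 - b n) / 2) \<longlonglongrightarrow> (L + b 0 - 0) / 2"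
    using assms unfolding sums_def by (intro tendsto_intros) simp_all
  then show ?thesis
    unfolding sums_def partial by simp
qed

lemma gbinomial_kernel_sums_of_Re_ge_2:
  fixes s t r w v :: complex
  assumes st: "s + t = v" and rw: "r + w = v" and v: "v \<notin> \<int>\<^sub>\<le>\<^sub>0"
    and strw: "s \<notin> \<int>\<^sub>\<le>\<^sub>0" "t \<notin> \<int>\<^sub>\<le>\<^sub>0" "r \<notin> \<int>\<^sub>\<le>\<^sub>0" "w \<notin> \<int>\<^sub>\<le>\<^sub>0"
    and "Re v \<ge> 2" "Re v < 4"
  shows "(\<lambda>j. ((- v) gchoose j) * recip_kernel s t r w j) sums ((Gamma s * Gamma t - Gamma r * Gamma w) * rGamma v)"
proof -
  define K where "K = recip_kernel s t r w"
  define R where "R = (Gamma s * Gamma t - Gamma r * Gamma w) * rGamma v"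
  define E where "E = norm (1 - v) + 3 * (2 + 3 * norm (v + 1))"
  define S where "S N = (\<Sum>j\<le>N. ((- v) gchoose j) * trunc_weight v N j * K j)" for N
  define a where "a k N = ((- v) gchoose k) * trunc_weight v N k * K k" for k N
  define b where "b k = ((- v) gchoose k) * K k" for k
  obtain U where "U \<ge> 0" and U: "\<And>j. j \<ge> 2 \<Longrightarrow> norm ((- v) gchoose j) \<le> U * (real j - 1) powr (Re v - 1)"
    using norm_gbinomial_minus_bound[of v] by metis
  obtain C j\<^sub>0 where "j\<^sub>0 \<ge> 2" "C \<ge> 0" and C3: "\<And>j. j \<ge> j\<^sub>0 \<Longrightarrow> norm (K j) \<le> C / (real j - 1)^3"
    and C4: "\<And>j. j \<ge> j\<^sub>0 \<Longrightarrow> norm (K j - K (Suc j)) \<le> C / (real j - 1)^4"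
    unfolding K_def using recip_kernel_decay[OF st rw strw] by metis
  have "(\<lambda>N. a k N) \<longlonglongrightarrow> b k" for k
    using tendsto_mult[OF tendsto_mult[OF tendsto_const trunc_weight_tendsto_1] tendsto_const]
    by (simp add: a_def b_def)
  then have "(\<lambda>N. a k N + a (Suc k) N) \<longlonglongrightarrow> b k + b (Suc k)" for k
    by (intro tendsto_add)
  moreover have "norm (a k N + a (Suc k) N) \<le> U * C * (1 + E) * (real k - 1) powr (Re v - 5)"
    if "k \<ge> j\<^sub>0" for k N
  proof -
    have "norm (K (Suc k)) \<le> C / (real (Suc k) - 1)^3"
      using that by (intro C3) simp
    also have "\<dots> \<le> C / (real k - 1)^3"
      using that \<open>j\<^sub>0 \<ge> 2\<close> \<open>C \<ge> 0\<close> by (intro divide_power_le_divide_power) auto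
    finally show ?thesis
      unfolding a_def E_def using that \<open>j\<^sub>0 \<ge> 2\<close> \<open>Re v \<ge> 2\<close> \<open>U \<ge> 0\<close> \<open>C \<ge> 0\<close>
      by (intro norm_paired_terms_le U C4) auto
  qed
  moreover have "summable (\<lambda>k. U * C * (1 + E) * (real k - 1) powr (Re v - 5))"
    using \<open>Re v < 4\<close> by (intro summable_shifted_powr) simp
  moreover have "(\<lambda>k. a k N + a (Suc k) N) sums (2 * S N - b 0)" for N
  proof -
    have "(\<lambda>k. a k N) sums S N"
      unfolding a_def S_def by (rule truncated_sum_sums)
    moreover from this have "(\<lambda>k. a (Suc k) N) sums (S N - a 0 N)"
      by (subst sums_Suc_iff) simp
    ultimately show ?thesis
      using sums_add by (fastforce simp: a_def b_def)
  qed
  ultimately have paired: "summable (\<lambda>k. b k + b (Suc k))"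
    "(\<lambda>N. 2 * S N - b 0) \<longlonglongrightarrow> (\<Sum>k. b k + b (Suc k))"
    by (rule tannery_sums[where N\<^sub>0 = 0]; simp)+
  have "(\<lambda>N. 2 * S N - b 0) \<longlonglongrightarrow> 2 * R - b 0"
    unfolding S_def R_def K_def by (intro tendsto_intros truncated_kernel_sum_tendsto[OF st rw v strw])
  with paired have "(\<lambda>k. b k + b (Suc k)) sums (2 * R - b 0)"
    using LIMSEQ_unique summable_sums by metis
  moreover have "b \<longlonglongrightarrow> 0"
  proof (rule Lim_null_comparison)
    show "eventually (\<lambda>n. norm (b n) \<le> U * C * (real n - 1) powr (Re v - 4)) sequentially"
      using eventually_ge_at_top[of j\<^sub>0]
    proof eventually_elim
      case (elim n)
      have "real n - 1 > 0"
        using elim \<open>j\<^sub>0 \<ge> 2\<close> by simp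
      have "norm (b n) \<le> (U * (real n - 1) powr (Re v - 1)) * (C / (real n - 1)^3)"
        unfolding b_def norm_mult using U[of n] C3[OF elim] elim \<open>j\<^sub>0 \<ge> 2\<close> \<open>U \<ge> 0\<close>
        by (intro mult_mono) auto
      also have "\<dots> = U * C * ((real n - 1) powr (Re v - 1) / (real n - 1)^3)"
        by simp
      also have "\<dots> = U * C * (real n - 1) powr (Re v - 4)"
        using powr_divide_power[OF \<open>real n - 1 > 0\<close>, of "Re v - 1" 3] by simp
      finally show ?case .
    qed
    have "filterlim (\<lambda>n. real n - 1) at_top sequentially"
      by (rule filterlim_tendsto_add_at_top[OF tendsto_const filterlim_real_sequentially, of "-1", simplified])
    then have "(\<lambda>n. (real n - 1) powr (Re v - 4)) \<longlonglongrightarrow> 0"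
      using \<open>Re v < 4\<close> by (intro tendsto_neg_powr) simp_all
    then show "(\<lambda>n. U * C * (real n - 1) powr (Re v - 4)) \<longlonglongrightarrow> 0"
      by (rule tendsto_mult_right_zero)
  qed
  ultimately have "b sums ((2 * R - b 0 + b 0) / 2)"
    by (rule sums_if_paired_sums)
  then show ?thesis
    by (simp add: b_def[abs_def] K_def R_def)
qed

text \<open>The reflection \<open>j \<mapsto> m - j\<close> turns \<open>1/(t + j)\<close> into \<open>-1/(s + j)\<close>, also when both denominators
  vanish (\<open>1/0 = 0\<close>), so no hypothesis on \<open>s\<close> and \<open>t\<close> is needed.\<close>

lemma binomial_recip_pair_sum_eq_0:
  fixes s t :: complex
  assumes st: "s + t = - of_nat m"
  shows "(\<Sum>j\<le>m. of_nat (m choose j) * (1 / (s + of_nat j) + 1 / (t + of_nat j))) = 0"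
proof -
  have "(\<Sum>j\<le>m. of_nat (m choose j) / (t + of_nat j))
      = (\<Sum>j\<in>{0..m}. of_nat (m choose (m + 0 - j)) / (t + of_nat (m + 0 - j)))"
    unfolding atLeast0AtMost[symmetric] by (rule sum.atLeastAtMost_rev)
  also have "\<dots> = (\<Sum>j\<in>{0..m}. - (of_nat (m choose j) / (s + of_nat j)))"
  proof (rule sum.cong[OF refl])
    fix j
    assume "j \<in> {0..m}"
    then have "m choose (m + 0 - j) = m choose j" "t + of_nat (m + 0 - j) = - (s + of_nat j)"
      using st by (simp_all add: binomial_symmetric[symmetric] of_nat_diff eq_neg_iff_add_eq_0 algebra_simps)
    then show "of_nat (m choose (m + 0 - j)) / (t + of_nat (m + 0 - j)) = - (of_nat (m choose j) / (s + of_nat j))"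
      by (simp only: divide_minus_right)
  qed
  finally show ?thesis
    by (simp add: distrib_left sum.distrib sum_negf atLeast0AtMost add_divide_distrib)
qed

lemma gbinomial_kernel_sums_nonpos_int:
  fixes s t r w :: complex
  assumes "s + t = - of_nat m" "r + w = - of_nat m"
  shows "(\<lambda>j. (of_nat m gchoose j) * recip_kernel s t r w j) sums 0"
proof -
  have "(\<lambda>j. (of_nat m gchoose j) * recip_kernel s t r w j) sums (\<Sum>j\<le>m. (of_nat m gchoose j) * recip_kernel s t r w j)"
    by (rule sums_finite) (auto simp: binomial_gbinomial[symmetric] binomial_eq_0)
  also have "(\<Sum>j\<le>m. (of_nat m gchoose j) * recip_kernel s t r w j)
      = (\<Sum>j\<le>m. of_nat (m choose j) * (1 / (s + of_nat j) + 1 / (t + of_nat j)))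
        - (\<Sum>j\<le>m. of_nat (m choose j) * (1 / (r + of_nat j) + 1 / (w + of_nat j)))"
    unfolding binomial_gbinomial[symmetric] recip_kernel_def sum_subtractf[symmetric]
    by (rule sum.cong) (simp_all add: algebra_simps)
  also have "\<dots> = 0"
    using binomial_recip_pair_sum_eq_0 assms by simp
  finally show ?thesis .
qed

lemma gbinomial_kernel_sums:
  fixes s t r w v :: complex
  assumes st: "s + t = v" and rw: "r + w = v" and "Re v < 4"
    and strw: "s \<notin> \<int>\<^sub>\<le>\<^sub>0" "t \<notin> \<int>\<^sub>\<le>\<^sub>0" "r \<notin> \<int>\<^sub>\<le>\<^sub>0" "w \<notin> \<int>\<^sub>\<le>\<^sub>0"
  shows "(\<lambda>j. ((- v) gchoose j) * recip_kernel s t r w j) sums ((Gamma s * Gamma t - Gamma r * Gamma w) * rGamma v)"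
proof (cases "v \<in> \<int>\<^sub>\<le>\<^sub>0")
  case True
  then obtain m where "v = - of_nat m"
    by (elim nonpos_Ints_cases')
  moreover have "rGamma v = 0"
    using True by (simp add: rGamma_eq_zero_iff)
  ultimately show ?thesis
    using gbinomial_kernel_sums_nonpos_int[of s t m r w] st rw by simp
next
  case False
  show ?thesis
  proof (cases "Re v < 3")
    case True
    with False show ?thesis
      by (intro gbinomial_kernel_sums_of_Re_less_3 st rw strw)
  next
    case False
    with \<open>v \<notin> \<int>\<^sub>\<le>\<^sub>0\<close> \<open>Re v < 4\<close> show ?thesis
      by (intro gbinomial_kernel_sums_of_Re_ge_2 st rw strw) simp_all
  qed
qed

section \<open>The very-well-poised series\<close>

lemma pochhammer_ratio_plus_one:
  fixes z :: "'a::field_char_0"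
  assumes "z \<notin> \<int>\<^sub>\<le>\<^sub>0"
  shows "pochhammer z n / pochhammer (1 + z) n = z / (z + of_nat n)"
    and "pochhammer (1 + z) n / pochhammer z n = (z + of_nat n) / z"
proof -
  have "pochhammer z n * (z + of_nat n) = z * pochhammer (1 + z) n"
    using pochhammer_Suc[of z n] pochhammer_rec[of z n] by (simp add: add.commute)
  moreover have "1 + z \<notin> \<int>\<^sub>\<le>\<^sub>0"
    using add_of_nat_notin_nonpos_Ints[OF assms, of 1] by (simp add: add.commute)
  then have "pochhammer (1 + z) n \<noteq> 0" "pochhammer z n \<noteq> 0" "z + of_nat n \<noteq> 0" "z \<noteq> 0"
    using assms add_of_nat_neq_0_if_notin_nonpos_Ints[OF assms, of n]
    by (auto dest: pochhammer_eq_0_imp_nonpos_Int)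
  ultimately show "pochhammer z n / pochhammer (1 + z) n = z / (z + of_nat n)"
    and "pochhammer (1 + z) n / pochhammer z n = (z + of_nat n) / z"
    by (simp_all add: field_simps)
qed

lemma prod_list_pochhammer_ratio:
  fixes ss :: "'a::field_char_0 list"
  assumes "\<And>s. s \<in> set ss \<Longrightarrow> s \<notin> \<int>\<^sub>\<le>\<^sub>0"
  shows "(\<Prod>s\<leftarrow>ss. pochhammer s n) / (\<Prod>s\<leftarrow>ss. pochhammer (1 + s) n) = (\<Prod>s\<leftarrow>ss. s / (s + of_nat n))"
  using assms
proof (induction ss)
  case Nil
  then show ?case by simp
next
  case (Cons s ss)
  have "(\<Prod>s\<leftarrow>s # ss. pochhammer s n) / (\<Prod>s\<leftarrow>s # ss. pochhammer (1 + s) n)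
      = pochhammer s n / pochhammer (1 + s) n * ((\<Prod>s\<leftarrow>ss. pochhammer s n) / (\<Prod>s\<leftarrow>ss. pochhammer (1 + s) n))"
    by simp
  then show ?case
    using Cons by (simp add: pochhammer_ratio_plus_one)
qed

lemma hyp_term_very_well_poised:
  fixes v :: complex
  assumes "v / 2 \<notin> \<int>\<^sub>\<le>\<^sub>0" and "\<And>s. s \<in> set ss \<Longrightarrow> s \<notin> \<int>\<^sub>\<le>\<^sub>0"
  shows "hyp_term (v # (1 + v / 2) # ss) (v / 2 # map ((+) 1) ss) (-1) n
       = ((- v) gchoose n) * ((v / 2 + of_nat n) / (v / 2) * (\<Prod>s\<leftarrow>ss. s / (s + of_nat n)))"
proof -
  have "hyp_term (v # (1 + v / 2) # ss) (v / 2 # map ((+) 1) ss) (-1) n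
      = ((-1)^n * pochhammer v n / fact n) * (pochhammer (1 + v / 2) n / pochhammer (v / 2) n
        * ((\<Prod>s\<leftarrow>ss. pochhammer s n) / (\<Prod>s\<leftarrow>ss. pochhammer (1 + s) n)))"
  proof -
    have rearrange: "x1 * (x2 * x3) / (y2 * y3) * z / f = (z * x1 / f) * (x2 / y2 * (x3 / y3))"
      for x1 x2 x3 y2 y3 z f :: complex
      by (simp add: divide_inverse mult_ac)
    show ?thesis
      unfolding hyp_term_def list.map prod_list.Cons map_map o_def of_nat_fact
      by (rule rearrange)
  qed
  also have "\<dots> = ((- v) gchoose n) * ((v / 2 + of_nat n) / (v / 2) * (\<Prod>s\<leftarrow>ss. s / (s + of_nat n)))"
    by (simp only: gbinomial_pochhammer pochhammer_ratio_plus_one(2)[OF assms(1)]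
        prod_list_pochhammer_ratio[OF assms(2)] minus_minus)
  finally show ?thesis .
qed

lemma very_well_poised_partial_fractions:
  fixes v A B X :: "'a::field_char_0"
  assumes nz: "v \<noteq> 0" "A \<noteq> 0" "B \<noteq> 0"
  defines "s3 \<equiv> v / 2 - A - B" and "s4 \<equiv> v / 2 - A + B" and "s5 \<equiv> v / 2 + A + B" and "s6 \<equiv> v / 2 + A - B"
  assumes n3: "s3 + X \<noteq> 0" and n4: "s4 + X \<noteq> 0" and n5: "s5 + X \<noteq> 0" and n6: "s6 + X \<noteq> 0"
  shows "(v / 2 + X) / (v / 2) * (\<Prod>s\<leftarrow>[s3, s5, s4, s6]. s / (s + X))
       = s3 * s5 * s4 * s6 / (4 * v * A * B) * (1 / (s5 + X) + 1 / (s3 + X) - 1 / (s6 + X) - 1 / (s4 + X))"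
proof -
  have recips: "1 / p + 1 / q - 1 / r - 1 / w = ((p + q) * (r * w) - (r + w) * (p * q)) / (p * q * r * w)"
    if "p \<noteq> 0" "q \<noteq> 0" "r \<noteq> 0" "w \<noteq> 0" for p q r w :: 'a
    using that by (simp add: field_simps)
  have "(s5 + X + (s3 + X)) * ((s6 + X) * (s4 + X)) - (s6 + X + (s4 + X)) * ((s5 + X) * (s3 + X))
      = (v + 2 * X) * (4 * A * B)"
    unfolding s3_def s4_def s5_def s6_def by (simp add: field_simps)
  then have recip_sum: "1 / (s5 + X) + 1 / (s3 + X) - 1 / (s6 + X) - 1 / (s4 + X)
      = (v + 2 * X) * (4 * A * B) / ((s5 + X) * (s3 + X) * (s6 + X) * (s4 + X))"
    using recips[OF n5 n3 n6 n4] by simp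
  have factor: "(v / 2 + X) / (v / 2) = (v + 2 * X) / v"
    using nz by (simp add: field_simps)
  have "Y / v * (a3 / q * (a5 / p * (a4 / w * (a6 / r * 1))))
      = a3 * a5 * a4 * a6 / (4 * v * A * B) * (Y * (4 * A * B) / (p * q * r * w))"
    if "p \<noteq> 0" "q \<noteq> 0" "r \<noteq> 0" "w \<noteq> 0" for Y a3 a4 a5 a6 p q r w :: 'a
    using that nz by (simp add: field_simps)
  then show ?thesis
    unfolding recip_sum factor using n3 n4 n5 n6 by simp
qed

lemma notin_nonpos_Ints_if_plus_one:
  assumes "z \<noteq> 0" "1 + z \<notin> \<int>\<^sub>\<le>\<^sub>0"
  shows "z \<notin> \<int>\<^sub>\<le>\<^sub>0"
proof
  assume "z \<in> \<int>\<^sub>\<le>\<^sub>0"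
  then obtain n where n: "z = - of_nat n" by (elim nonpos_Ints_cases')
  with assms(1) obtain m where "n = Suc m" by (cases n) auto
  with n have "1 + z = - of_nat m" by simp
  with assms(2) show False by simp
qed

lemma notin_nonpos_Ints_if_Re_mult_pos:
  fixes c z :: complex
  assumes "Re (c * z) > 0" "1 + z \<notin> \<int>\<^sub>\<le>\<^sub>0"
  shows "z \<notin> \<int>\<^sub>\<le>\<^sub>0"
proof -
  have "z \<noteq> 0"
    using assms(1) by auto
  then show ?thesis
    using assms(2) by (rule notin_nonpos_Ints_if_plus_one)
qed

lemma very_well_poised_hyp_term_sums:
  fixes v A B :: complex
  assumes "A \<noteq> 0" "B \<noteq> 0" "Re v < 4" "v / 2 \<notin> \<int>\<^sub>\<le>\<^sub>0"
  defines "s3 \<equiv> v / 2 - A - B" and "s4 \<equiv> v / 2 - A + B" and "s5 \<equiv> v / 2 + A + B" and "s6 \<equiv> v / 2 + A - B"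
  assumes s: "s3 \<notin> \<int>\<^sub>\<le>\<^sub>0" "s4 \<notin> \<int>\<^sub>\<le>\<^sub>0" "s5 \<notin> \<int>\<^sub>\<le>\<^sub>0" "s6 \<notin> \<int>\<^sub>\<le>\<^sub>0"
  shows "hyp_term [v, 1 + v / 2, s3, s5, s4, s6] [v / 2, 1 + s3, 1 + s5, 1 + s4, 1 + s6] (-1) sums
           (s3 * s5 * s4 * s6 / (4 * v * A * B) * ((Gamma s5 * Gamma s3 - Gamma s6 * Gamma s4) * rGamma v))"
proof -
  have "v \<noteq> 0"
    using assms(4) by auto
  have hyp_term_eq: "hyp_term [v, 1 + v / 2, s3, s5, s4, s6] [v / 2, 1 + s3, 1 + s5, 1 + s4, 1 + s6] (-1) n
      = s3 * s5 * s4 * s6 / (4 * v * A * B) * (((- v) gchoose n) * recip_kernel s5 s3 s6 s4 n)" for n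
  proof -
    have "[v / 2, 1 + s3, 1 + s5, 1 + s4, 1 + s6] = v / 2 # map ((+) 1) [s3, s5, s4, s6]"
      by simp
    then have "hyp_term [v, 1 + v / 2, s3, s5, s4, s6] [v / 2, 1 + s3, 1 + s5, 1 + s4, 1 + s6] (-1) n
        = ((- v) gchoose n) * ((v / 2 + of_nat n) / (v / 2) * (\<Prod>s\<leftarrow>[s3, s5, s4, s6]. s / (s + of_nat n)))"
      using hyp_term_very_well_poised[OF assms(4), of "[s3, s5, s4, s6]" n] s by auto
    also have "(v / 2 + of_nat n) / (v / 2) * (\<Prod>s\<leftarrow>[s3, s5, s4, s6]. s / (s + of_nat n))
        = s3 * s5 * s4 * s6 / (4 * v * A * B) * recip_kernel s5 s3 s6 s4 n"
      unfolding recip_kernel_def s3_def s4_def s5_def s6_def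
      by (rule very_well_poised_partial_fractions[OF \<open>v \<noteq> 0\<close> assms(1,2)])
        (use s in \<open>simp_all add: add_of_nat_neq_0_if_notin_nonpos_Ints s3_def s4_def s5_def s6_def\<close>)
    finally show ?thesis
      by simp
  qed
  have "s5 + s3 = v" "s6 + s4 = v"
    by (simp_all add: s3_def s4_def s5_def s6_def)
  show ?thesis
    unfolding hyp_term_eq by (rule sums_mult[OF gbinomial_kernel_sums[OF \<open>s5 + s3 = v\<close> \<open>s6 + s4 = v\<close> assms(3) s(3,1,4,2)]])
qed

lemma very_well_poised_constant_eq:
  fixes v a b c G :: complex
  assumes "c \<noteq> 0"
  defines "A \<equiv> a / (2 * c)" and "B \<equiv> b / (2 * c)"
  shows "(v / 2 - A - B) * (v / 2 + A + B) * (v / 2 - A + B) * (v / 2 + A - B) / (4 * v * A * B) * (G * rGamma v)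
       = (v * c - a - b) * (v * c + a + b) * (v * c - a + b) * (v * c + a - b) / (16 * v * a * b * c^2 * Gamma v) * G"
proof -
  have a: "a = 2 * c * A" and b: "b = 2 * c * B"
    using assms by (simp_all add: A_def B_def)
  have numerator: "(v * c - a - b) * (v * c + a + b) * (v * c - a + b) * (v * c + a - b)
      = (v / 2 - A - B) * (v / 2 + A + B) * (v / 2 - A + B) * (v / 2 + A - B) * (16 * c^4)"
    unfolding a b by (simp add: field_simps) algebra
  have denominator: "16 * v * a * b * c^2 = 4 * v * A * B * (16 * c^4)"
    unfolding a b by algebra
  have Gamma: "x / (y * Gamma v) * G = x / y * (G * rGamma v)" for x y
    by (simp add: rGamma_inverse_Gamma divide_inverse mult_ac)
  have cancel: "x * (16 * c^4) / (y * (16 * c^4)) = x / y" for x y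
    using assms(1) by (intro nonzero_mult_divide_mult_cancel_right) simp
  show ?thesis
    unfolding numerator denominator Gamma cancel ..
qed

theorem mainTheorem1:
  fixes v a b c :: complex
  assumes "a \<noteq> 0" "b \<noteq> 0" "Re v < 4" "Re c > 0"
    and "Re (v * c + a + b) > 0" "Re (v * c + a - b) > 0"
    and "Re (v * c - a + b) > 0" "Re (v * c - a - b) > 0"
    and "v/2 \<notin> \<int>\<^sub>\<le>\<^sub>0"
    and "1 + (v/2 - a/(2*c) - b/(2*c)) \<notin> \<int>\<^sub>\<le>\<^sub>0"
    and "1 + (v/2 - a/(2*c) + b/(2*c)) \<notin> \<int>\<^sub>\<le>\<^sub>0"
    and "1 + (v/2 + a/(2*c) + b/(2*c)) \<notin> \<int>\<^sub>\<le>\<^sub>0"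
    and "1 + (v/2 + a/(2*c) - b/(2*c)) \<notin> \<int>\<^sub>\<le>\<^sub>0"
  shows "let s3 = v/2 - a/(2*c) - b/(2*c); s4 = v/2 - a/(2*c) + b/(2*c);
             s5 = v/2 + a/(2*c) + b/(2*c); s6 = v/2 + a/(2*c) - b/(2*c);
             P = (v * c - a - b) * (v * c + a + b) * (v * c - a + b) * (v * c + a - b)
         in summable (hyp_term [v, 1 + v/2, s3, s5, s4, s6] [v/2, 1 + s3, 1 + s5, 1 + s4, 1 + s6] (-1))
            \<and> hypergeom [v, 1 + v/2, s3, s5, s4, s6] [v/2, 1 + s3, 1 + s5, 1 + s4, 1 + s6] (-1)
              = P / (16 * v * a * b * c^2 * Gamma v) * (Gamma s5 * Gamma s3 - Gamma s6 * Gamma s4)"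
proof -
  have "c \<noteq> 0"
    using assms(4) by auto
  then have "a / (2 * c) \<noteq> 0" "b / (2 * c) \<noteq> 0"
    and "2 * c * (v/2 - a/(2*c) - b/(2*c)) = v * c - a - b" "2 * c * (v/2 - a/(2*c) + b/(2*c)) = v * c - a + b"
    and "2 * c * (v/2 + a/(2*c) + b/(2*c)) = v * c + a + b" "2 * c * (v/2 + a/(2*c) - b/(2*c)) = v * c + a - b"
    using assms(1,2) by (simp_all add: field_simps)
  then have "v/2 - a/(2*c) - b/(2*c) \<notin> \<int>\<^sub>\<le>\<^sub>0" "v/2 - a/(2*c) + b/(2*c) \<notin> \<int>\<^sub>\<le>\<^sub>0"
    "v/2 + a/(2*c) + b/(2*c) \<notin> \<int>\<^sub>\<le>\<^sub>0" "v/2 + a/(2*c) - b/(2*c) \<notin> \<int>\<^sub>\<le>\<^sub>0"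
    using assms(5-8,10-13) notin_nonpos_Ints_if_Re_mult_pos[of "2 * c"] by metis+
  from very_well_poised_hyp_term_sums[OF \<open>a / (2 * c) \<noteq> 0\<close> \<open>b / (2 * c) \<noteq> 0\<close> assms(3,9) this]
  show ?thesis
    unfolding Let_def hypergeom_def very_well_poised_constant_eq[OF \<open>c \<noteq> 0\<close>]
    by (intro conjI sums_summable sums_unique[symmetric])
qed

end
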